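(* Let $p,q\ge2$ with $q-1=d(p-1)$ for a positive integer $d$. The embedding $j_1:F(p)\to F(q)$ determined by $x_i\mapsto x_{di}$ ($i\ge0$) is a quasi-isometric embedding with respect to the word metrics of $F(p)$ and $F(q)$.
   Context: For $r\ge2$, $F(r)$ is the group of piecewise-linear orientation-preserving homeomorphisms of $[0,1]$ with breakpoints in $\mathbb{Z}[1/r]$ and slopes integer powers of $r$, with presentation $\langle x_0,x_1,\dots\mid x_i^{-1}x_jx_i=x_{j+r-1}\ (i<j)\rangle$; it is generated by $x_0,\dots,x_{r-1}$ and its word metric is taken with respect to these generators. The assignment $x_i\mapsto x_{di}$ from the generators of $F(p)$ to $F(q)$ respects the relations and defines an injective homomorphism $j_1$. A map $f$ between metric spaces is a quasi-isometric embedding if there are constants $C\ge1$, $K\ge0$ with $\frac1C d(a,b)-K\le d(f(a),f(b))\le C d(a,b)+K$ for all $a,b$. *)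

theory Defs imports Complex_Main begin

text \<open>Words over the infinite generating set x_0, x_1, ... :
 a letter (i, False) stands for x_i and (i, True) for x_i inverse.\<close>
type_synonym letter = "nat \<times> bool"

text \<open>Equality in F(r) given by the presentation
 generators x_0, x_1, ... and relations x_i^-1 x_j x_i = x_(j+r-1) for i < j:
 the congruence on words generated by free cancellation and the relators.\<close>
inductive fr_eq :: "nat \<Rightarrow> letter list \<Rightarrow> letter list \<Rightarrow> bool" for r where
  refl: "fr_eq r w w"
| sym: "fr_eq r u v \<Longrightarrow> fr_eq r v u"
| trans: "fr_eq r u v \<Longrightarrow> fr_eq r v w \<Longrightarrow> fr_eq r u w"
| cancel: "fr_eq r (u @ [(i, b), (i, \<not> b)] @ v) (u @ v)"
| rel: "i < j \<Longrightarrow>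
    fr_eq r (u @ [(i, True), (j, False), (i, False)] @ v) (u @ [(j + r - 1, False)] @ v)"

definition winv :: "letter list \<Rightarrow> letter list" where
  "winv w = rev (map (\<lambda>(i, b). (i, \<not> b)) w)"

definition word_dist :: "nat \<Rightarrow> letter list \<Rightarrow> letter list \<Rightarrow> nat" where
  "word_dist r u v = (LEAST n. \<exists>w. length w = n \<and> (\<forall>(i, b) \<in> set w. i < r)
                                 \<and> fr_eq r w (winv u @ v))"

definition j1 :: "nat \<Rightarrow> letter list \<Rightarrow> letter list" where
  "j1 d w = map (\<lambda>(i, b). (d * i, b)) w"

end

theory Submission imports Defs begin

text \<open>\<open>F(r)\<close> acts faithfully on the ends of a forest of infinitely many \<open>r\<close>-ary trees, and the
  carets of the reduced forest diagram of an element \<open>g\<close> are the nodes on which \<open>g\<close> is not a rigid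
  replacement of address prefixes. A word of length \<open>n\<close> in letters \<open>x\<^sub>i\<^sup>\<plusminus>\<^sup>1\<close>, \<open>i < K\<close>, creates at
  most \<open>n\<close> carets, all in trees below \<open>n (K + r)\<close>. Conversely, if the diagram of \<open>g\<close> has at most
  \<open>n\<close> carets in trees below \<open>M\<close>, then \<open>g = N\<^sub>R N\<^sub>D\<inverse>\<close> for positive words building its two
  forests, and rewriting \<open>x\<^sub>i = x\<^sub>0\<^sup>-\<^sup>m x\<^sub>b x\<^sub>0\<^sup>m\<close> along these sorted words gives a word in
  \<open>x\<^sub>0, \<dots>, x\<^bsub>r-1\<^esub>\<close> of length \<open>O(n + M)\<close>.

  The map \<open>(n, s) \<mapsto> (d n, d s)\<close> of ends intertwines the actions of \<open>F(p)\<close> and \<open>F(q)\<close> along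
  \<open>j\<^sub>1\<close>, so it embeds the carets of \<open>g\<close> into those of \<open>j\<^sub>1 g\<close>. Hence a word of length \<open>n\<close> for
  \<open>j\<^sub>1 g\<close> yields a word of length \<open>O(n)\<close> for \<open>g\<close>; the other inequality holds because \<open>j\<^sub>1\<close> sends
  generators to generators.\<close>

section \<open>Words and the presentation\<close>

declare fr_eq.trans [trans]

lemma fr_eq_context: "fr_eq r u v \<Longrightarrow> fr_eq r (x @ u @ y) (x @ v @ y)"
proof (induction rule: fr_eq.induct)
  case (cancel u i b v)
  show ?case using fr_eq.cancel[of r "x @ u" i b "v @ y"] by simp
next
  case (rel i j u v)
  show ?case using fr_eq.rel[OF rel, where u = "x @ u" and v = "v @ y"] by simp
qed (auto intro: fr_eq.intros)

lemma fr_eq_append: "fr_eq r u u' \<Longrightarrow> fr_eq r v v' \<Longrightarrow> fr_eq r (u @ v) (u' @ v')"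
  using fr_eq_context[of r u u' "[]" v] fr_eq_context[of r v v' u' "[]"] by (simp add: fr_eq.trans)

lemma fr_eq_Cons: "fr_eq r u v \<Longrightarrow> fr_eq r (l # u) (l # v)"
  using fr_eq_context[of r u v "[l]" "[]"] by simp

lemma winv_Nil [simp]: "winv [] = []"
  by (simp add: winv_def)

lemma winv_Cons [simp]: "winv (l # w) = winv w @ [(fst l, \<not> snd l)]"
  by (cases l) (simp add: winv_def)

lemma winv_append [simp]: "winv (u @ v) = winv v @ winv u"
  by (simp add: winv_def)

lemma length_winv [simp]: "length (winv w) = length w"
  by (simp add: winv_def)

lemma winv_winv [simp]: "winv (winv w) = w"
  by (induction w) auto

lemma letters_less_iff: "(\<forall>(i, b)\<in>set w. i < r) \<longleftrightarrow> (\<forall>l\<in>set w. fst l < r)"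
  by auto

lemma winv_letters_less [simp]: "(\<forall>l\<in>set (winv w). fst l < r) \<longleftrightarrow> (\<forall>l\<in>set w. fst l < r)"
  by (auto simp: winv_def)

lemma fr_eq_cancel_pair: "fr_eq r [(i, b), (i, \<not> b)] []"
  using fr_eq.cancel[of r "[]" i b "[]"] by simp

lemma fr_eq_append_winv: "fr_eq r (w @ winv w) []"
proof (induction w)
  case (Cons l w)
  obtain i b where l: "l = (i, b)" by (cases l)
  have "fr_eq r ([l] @ (w @ winv w) @ [(i, \<not> b)]) ([l] @ [] @ [(i, \<not> b)])"
    by (rule fr_eq_context[OF Cons.IH])
  then show ?case using l fr_eq_cancel_pair fr_eq.trans by fastforce
qed (simp add: fr_eq.refl)

lemma fr_eq_rel_word: "i < j \<Longrightarrow> fr_eq r [(i, True), (j, False), (i, False)] [(j + r - 1, False)]"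
  using fr_eq.rel[of i j r "[]" "[]"] by simp

lemma fr_eq_insert_pair: "fr_eq r (x @ y) (x @ [(i, b), (i, \<not> b)] @ y)"
  by (rule fr_eq.sym) (rule fr_eq.cancel)

lemma fr_eq_rel_word_inv: "i < j \<Longrightarrow> fr_eq r [(i, True), (j, True), (i, False)] [(j + r - 1, True)]"
proof -
  assume ij: "i < j"
  let ?c = "j + r - 1"
  have "fr_eq r [(i, True), (j, True), (i, False)]
      ([(i, True), (j, True), (i, False)] @ [(?c, False), (?c, True)])"
    using fr_eq_insert_pair[of r "[(i, True), (j, True), (i, False)]" "[]" ?c False] by simp
  also have "fr_eq r \<dots> ([(i, True), (j, True), (i, False)] @ [(i, True), (j, False), (i, False)] @ [(?c, True)])"
    using fr_eq_context[OF fr_eq.sym[OF fr_eq_rel_word[OF ij]],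
        where x = "[(i, True), (j, True), (i, False)]" and y = "[(?c, True)]"] by simp
  also have "fr_eq r \<dots> ([(i, True), (j, True)] @ [(j, False), (i, False), (?c, True)])"
    using fr_eq.cancel[of r "[(i, True), (j, True)]" i False "[(j, False), (i, False), (?c, True)]"]
    by simp
  also have "fr_eq r \<dots> ([(i, True)] @ [(i, False), (?c, True)])"
    using fr_eq.cancel[of r "[(i, True)]" j True "[(i, False), (?c, True)]"] by simp
  also have "fr_eq r \<dots> [(?c, True)]"
    using fr_eq.cancel[of r "[]" i True "[(?c, True)]"] by simp
  finally show ?thesis .
qed

lemma fr_eq_winv: "fr_eq r u v \<Longrightarrow> fr_eq r (winv u) (winv v)"
proof (induction rule: fr_eq.induct)
  case (cancel u i b v)
  show ?case using fr_eq.cancel[of r "winv v" i b "winv u"] by simp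
next
  case (rel i j u v)
  show ?case using fr_eq_context[OF fr_eq_rel_word_inv[OF rel], of r "winv v" "winv u"] by simp
qed (auto intro: fr_eq.intros)

section \<open>The action on the ends of an r-ary forest\<close>

text \<open>A point \<open>(n, s)\<close> is the end of the \<open>n\<close>-th tree of a forest of infinitely many
  \<open>r\<close>-ary trees reached along the address \<open>s\<close>. The generator \<open>x\<^sub>k\<close> hangs trees
  \<open>k, \<dots>, k + r - 1\<close> below a new caret that becomes tree \<open>k\<close>, renumbering the later trees;
  this is the action of \<open>F(r)\<close> on forest diagrams.\<close>

type_synonym point = "nat \<times> (nat \<Rightarrow> nat)"

definition digits :: "nat \<Rightarrow> (nat \<Rightarrow> nat) \<Rightarrow> bool" where
  "digits r s \<longleftrightarrow> (\<forall>i. s i < r)"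

definition valid_point :: "nat \<Rightarrow> point \<Rightarrow> bool" where
  "valid_point r x \<longleftrightarrow> digits r (snd x)"

definition prepend :: "nat list \<Rightarrow> (nat \<Rightarrow> nat) \<Rightarrow> nat \<Rightarrow> nat" where
  "prepend v s = (\<lambda>i. if i < length v then v ! i else s (i - length v))"

definition tail_seq :: "(nat \<Rightarrow> nat) \<Rightarrow> nat \<Rightarrow> nat" where
  "tail_seq s = (\<lambda>i. s (Suc i))"

fun gen_action :: "nat \<Rightarrow> letter \<Rightarrow> point \<Rightarrow> point" where
  "gen_action r (k, False) (n, s) =
     (if n < k then (n, s) else if n < k + r then (k, prepend [n - k] s) else (n - (r - 1), s))"
| "gen_action r (k, True) (n, s) =
     (if n < k then (n, s) else if n = k then (k + s 0, tail_seq s) else (n + (r - 1), s))"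

primrec word_action :: "nat \<Rightarrow> letter list \<Rightarrow> point \<Rightarrow> point" where
  "word_action r [] x = x"
| "word_action r (l # w) x = gen_action r l (word_action r w x)"

lemma prepend_Nil [simp]: "prepend [] s = s"
  by (simp add: prepend_def)

lemma prepend_append: "prepend (u @ v) s = prepend u (prepend v s)"
  by (auto simp: prepend_def nth_append fun_eq_iff)

lemma prepend_Cons_0 [simp]: "prepend (a # v) s 0 = a"
  by (simp add: prepend_def)

lemma tail_seq_prepend_Cons [simp]: "tail_seq (prepend (a # v) s) = prepend v s"
  by (simp add: prepend_def tail_seq_def fun_eq_iff)

lemma prepend_tail_seq [simp]: "prepend [s 0] (tail_seq s) = s"
  by (auto simp: tail_seq_def prepend_def fun_eq_iff)

lemma prepend_nth: "i < length v \<Longrightarrow> prepend v s i = v ! i"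
  by (simp add: prepend_def)

lemma prepend_length_plus: "prepend v s (length v + i) = s i"
  by (simp add: prepend_def)

lemma digits_prepend [simp]: "digits r (prepend v s) \<longleftrightarrow> (\<forall>a\<in>set v. a < r) \<and> digits r s"
proof
  assume h: "digits r (prepend v s)"
  then have "\<forall>a\<in>set v. a < r"
    by (metis digits_def in_set_conv_nth prepend_nth)
  moreover have "digits r s" using h by (metis digits_def prepend_length_plus)
  ultimately show "(\<forall>a\<in>set v. a < r) \<and> digits r s" ..
qed (auto simp: digits_def prepend_def)

lemma digits_tail_seq [simp]: "digits r s \<Longrightarrow> digits r (tail_seq s)"
  by (simp add: digits_def tail_seq_def)

lemma digits_const: "c < r \<Longrightarrow> digits r (\<lambda>_. c)"
  by (simp add: digits_def)

lemma valid_point_gen_action: "r \<ge> 1 \<Longrightarrow> valid_point r x \<Longrightarrow> valid_point r (gen_action r l x)"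
proof -
  obtain n s where x: "x = (n, s)" by (cases x)
  obtain k b where l: "l = (k, b)" by (cases l)
  assume "r \<ge> 1" "valid_point r x"
  then show ?thesis by (cases b) (auto simp: x l valid_point_def)
qed

lemma valid_point_word_action: "r \<ge> 1 \<Longrightarrow> valid_point r x \<Longrightarrow> valid_point r (word_action r w x)"
  by (induction w) (auto simp: valid_point_gen_action)

lemma word_action_append [simp]: "word_action r (u @ v) x = word_action r u (word_action r v x)"
  by (induction u) auto

lemma word_action_Cons_comp: "word_action r (l # w) = gen_action r l \<circ> word_action r w"
  by (simp add: fun_eq_iff)

lemma gen_action_inverse:
  assumes "r \<ge> 1" and "valid_point r x"
  shows "gen_action r (k, \<not> b) (gen_action r (k, b) x) = x"
proof -
  obtain n s where x: "x = (n, s)" by (cases x)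
  have "s 0 < r" using assms x by (simp add: valid_point_def digits_def)
  then show ?thesis using assms(1) unfolding x by (cases b) auto
qed

lemma word_action_winv:
  "r \<ge> 1 \<Longrightarrow> valid_point r x \<Longrightarrow> word_action r (winv w) (word_action r w x) = x"
proof (induction w arbitrary: x)
  case (Cons l w)
  then show ?case
    using gen_action_inverse[of r "word_action r w x" "fst l" "snd l"] valid_point_word_action
    by simp
qed simp

lemma word_action_winv':
  "r \<ge> 1 \<Longrightarrow> valid_point r x \<Longrightarrow> word_action r w (word_action r (winv w) x) = x"
  using word_action_winv[of r x "winv w"] by simp

lemma word_action_inj:
  "r \<ge> 1 \<Longrightarrow> valid_point r x \<Longrightarrow> valid_point r y \<Longrightarrow> word_action r w x = word_action r w y \<Longrightarrow> x = y"
  by (metis word_action_winv)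

lemma word_action_winv_cong:
  assumes "r \<ge> 1" and "\<And>x. valid_point r x \<Longrightarrow> word_action r u x = word_action r v x"
    and "valid_point r x"
  shows "word_action r (winv u) x = word_action r (winv v) x"
  by (metis assms valid_point_word_action word_action_winv word_action_winv')

lemma gen_action_rel:
  assumes r: "r \<ge> 1" and ij: "i < j"
  shows "gen_action r (i, True) (gen_action r (j, False) (gen_action r (i, False) x))
       = gen_action r (j + r - 1, False) x"
proof -
  obtain n s where x: "x = (n, s)" by (cases x)
  consider "n < i + r" | "i + r \<le> n" "n < j + r - 1" | "j + r - 1 \<le> n" "n < j + 2 * r - 1"
    | "j + 2 * r - 1 \<le> n" by linarith
  then show ?thesis
  proof cases
    case 1
    then show ?thesis using ij by (auto simp: x)
  next
    case 2
    then have "gen_action r (i, False) (n, s) = (n - (r - 1), s)"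
      and "i < n - (r - 1)" "n - (r - 1) < j" using r by auto
    then show ?thesis using 2 r by (simp add: x)
  next
    case 3
    then have "gen_action r (i, False) (n, s) = (n - (r - 1), s)"
      and "gen_action r (j, False) (n - (r - 1), s) = (j, prepend [n - (j + r - 1)] s)"
      and "gen_action r (j + r - 1, False) (n, s) = (j + r - 1, prepend [n - (j + r - 1)] s)"
      using r ij by (auto simp: add.commute)
    then show ?thesis using ij r by (simp add: x)
  next
    case 4
    then have "gen_action r (i, False) (n, s) = (n - (r - 1), s)"
      and "gen_action r (j, False) (n - (r - 1), s) = (n - (r - 1) - (r - 1), s)"
      and "gen_action r (j + r - 1, False) (n, s) = (n - (r - 1), s)"
      and "i < n - (r - 1) - (r - 1)" "n - (r - 1) - (r - 1) + (r - 1) = n - (r - 1)"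
      using r ij by auto
    then show ?thesis by (simp add: x)
  qed
qed

lemma word_action_fr_eq:
  "fr_eq r u v \<Longrightarrow> r \<ge> 1 \<Longrightarrow> valid_point r x \<Longrightarrow> word_action r u x = word_action r v x"
proof (induction arbitrary: x rule: fr_eq.induct)
  case (cancel u i b v)
  then show ?case
    using gen_action_inverse[of r "word_action r v x" i "\<not> b"] valid_point_word_action by simp
next
  case (rel i j u v)
  then show ?case using gen_action_rel by simp
qed auto

section \<open>Carets\<close>

text \<open>A cylinder \<open>(n, v)\<close> is the node of the forest at address \<open>v\<close> in tree \<open>n\<close>. For an element
  \<open>f\<close> of \<open>F(r)\<close>, \<open>carets r f\<close> is the set of carets of the domain forest of the reduced forest
  diagram of \<open>f\<close>: the nodes whose cylinder \<open>f\<close> does not map rigidly onto another cylinder.\<close>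

type_synonym cylinder = "nat \<times> nat list"

definition cyl_point :: "cylinder \<Rightarrow> (nat \<Rightarrow> nat) \<Rightarrow> point" where
  "cyl_point c s = (fst c, prepend (snd c) s)"

definition valid_cyl :: "nat \<Rightarrow> cylinder \<Rightarrow> bool" where
  "valid_cyl r c \<longleftrightarrow> (\<forall>a\<in>set (snd c). a < r)"

definition affine_on :: "nat \<Rightarrow> (point \<Rightarrow> point) \<Rightarrow> cylinder \<Rightarrow> bool" where
  "affine_on r f c \<longleftrightarrow> (\<exists>c'. \<forall>s. digits r s \<longrightarrow> f (cyl_point c s) = cyl_point c' s)"

definition carets :: "nat \<Rightarrow> (point \<Rightarrow> point) \<Rightarrow> cylinder set" where
  "carets r f = {c. valid_cyl r c \<and> \<not> affine_on r f c}"

definition cyl_image :: "nat \<Rightarrow> (point \<Rightarrow> point) \<Rightarrow> cylinder \<Rightarrow> cylinder" where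
  "cyl_image r f c = (THE c'. \<forall>s. digits r s \<longrightarrow> f (cyl_point c s) = cyl_point c' s)"

lemma valid_point_cyl_point [simp]: "valid_point r (cyl_point c s) \<longleftrightarrow> valid_cyl r c \<and> digits r s"
  by (simp add: valid_point_def cyl_point_def valid_cyl_def)

lemma cyl_point_append: "cyl_point (n, v @ u) s = cyl_point (n, v) (prepend u s)"
  by (simp add: cyl_point_def prepend_append)

lemma cyl_point_inject:
  assumes r: "r \<ge> 2" and eq: "\<forall>s. digits r s \<longrightarrow> cyl_point c s = cyl_point c' s"
  shows "c = c'"
proof -
  obtain n v n' v' where c: "c = (n, v)" and c': "c' = (n', v')" by (cases c, cases c')
  have eq_const: "n = n' \<and> prepend v (\<lambda>_. a) = prepend v' (\<lambda>_. a)" if "a < r" for a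
    using eq digits_const[OF that] unfolding c c' cyl_point_def by auto
  \<comment> \<open>at the index where the shorter address ends, one side reads the tail \<open>0 0 \<dots>\<close> resp.
     \<open>1 1 \<dots>\<close>, the other a fixed digit\<close>
  have "length v = length v'"
  proof (rule ccontr)
    assume "length v \<noteq> length v'"
    then obtain i where "i < length v \<and> i = length v' \<or> i < length v' \<and> i = length v"
      by (metis linorder_neqE_nat)
    then show False
      using eq_const[of 0] eq_const[of 1] r
      by (metis prepend_nth prepend_length_plus add_0_right zero_neq_one one_less_numeral_iff
          semiring_norm(76) order_less_le_trans pos2)
  qed
  then have "v = v'"
    using eq_const[of 0] r by (metis nth_equalityI prepend_nth pos2 order_less_le_trans)
  then show ?thesis using c c' eq_const[of 0] r by simp
qed

lemma cyl_image_eqI: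
  assumes "r \<ge> 2" and "\<forall>s. digits r s \<longrightarrow> f (cyl_point c s) = cyl_point c' s"
  shows "cyl_image r f c = c'"
  unfolding cyl_image_def
proof (rule the_equality)
  fix c'' assume "\<forall>s. digits r s \<longrightarrow> f (cyl_point c s) = cyl_point c'' s"
  then show "c'' = c'" using assms cyl_point_inject by metis
qed (rule assms(2))

lemma cyl_image:
  "r \<ge> 2 \<Longrightarrow> affine_on r f c \<Longrightarrow> digits r s \<Longrightarrow> f (cyl_point c s) = cyl_point (cyl_image r f c) s"
  unfolding affine_on_def using cyl_image_eqI by metis

lemma valid_cyl_cyl_image:
  assumes r: "r \<ge> 2" and "affine_on r f c" and "valid_cyl r c"
    and valid_f: "\<And>x. valid_point r x \<Longrightarrow> valid_point r (f x)"
  shows "valid_cyl r (cyl_image r f c)"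
proof -
  have "digits r (\<lambda>_. 0)" using r by (simp add: digits_const)
  then show ?thesis
    using valid_f[of "cyl_point c (\<lambda>_. 0)"] cyl_image[OF r assms(2)] assms(3) by simp
qed

lemma carets_cong: "(\<And>x. valid_point r x \<Longrightarrow> f x = g x) \<Longrightarrow> carets r f = carets r g"
  unfolding carets_def affine_on_def by (metis valid_point_cyl_point)

lemma affine_on_append:
  assumes "affine_on r f (n, v)" and "\<forall>a\<in>set u. a < r"
  shows "affine_on r f (n, v @ u)"
proof -
  obtain m w where "\<forall>s. digits r s \<longrightarrow> f (cyl_point (n, v) s) = cyl_point (m, w) s"
    using assms(1) unfolding affine_on_def by auto
  then have "\<forall>s. digits r s \<longrightarrow> f (cyl_point (n, v @ u) s) = cyl_point (m, w @ u) s"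
    using assms(2) by (simp add: cyl_point_append)
  then show ?thesis unfolding affine_on_def by blast
qed

lemma carets_comp_subset:
  assumes r: "r \<ge> 2" and valid_f: "\<And>x. valid_point r x \<Longrightarrow> valid_point r (f x)"
  shows "carets r (g \<circ> f) \<subseteq>
    carets r f \<union> {c. valid_cyl r c \<and> affine_on r f c \<and> cyl_image r f c \<in> carets r g}"
proof
  fix c assume c: "c \<in> carets r (g \<circ> f)"
  show "c \<in> carets r f \<union> {c. valid_cyl r c \<and> affine_on r f c \<and> cyl_image r f c \<in> carets r g}"
  proof (rule ccontr)
    assume "\<not> ?thesis"
    moreover have "valid_cyl r c" using c by (simp add: carets_def)
    ultimately have f: "affine_on r f c" and "affine_on r g (cyl_image r f c)"
      using valid_cyl_cyl_image[OF r _ _ valid_f] by (auto simp: carets_def)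
    then obtain c' where "\<forall>s. digits r s \<longrightarrow> g (cyl_point (cyl_image r f c) s) = cyl_point c' s"
      by (auto simp: affine_on_def)
    then have "affine_on r (g \<circ> f) c"
      unfolding affine_on_def using cyl_image[OF r f] by (metis comp_apply)
    then show False using c by (simp add: carets_def)
  qed
qed

lemma finite_card_cyl_image_preimage:
  fixes w :: "letter list" and B :: "cylinder set"
  assumes r: "r \<ge> 2" and "finite B"
  defines "S \<equiv> {c. valid_cyl r c \<and> affine_on r (word_action r w) c \<and> cyl_image r (word_action r w) c \<in> B}"
  shows "finite S \<and> card S \<le> card B"
proof -
  have "inj_on (cyl_image r (word_action r w)) S"
  proof (rule inj_onI)
    fix c1 c2 assume c1: "c1 \<in> S" and c2: "c2 \<in> S"
      and eq: "cyl_image r (word_action r w) c1 = cyl_image r (word_action r w) c2"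
    have "\<forall>s. digits r s \<longrightarrow> cyl_point c1 s = cyl_point c2 s"
      using cyl_image[OF r, of "word_action r w"] c1 c2 eq r
        word_action_inj[of r "cyl_point c1 _" "cyl_point c2 _" w]
      by (simp add: S_def)
    then show "c1 = c2" using cyl_point_inject[OF r] by blast
  qed
  moreover have "cyl_image r (word_action r w) ` S \<subseteq> B" by (auto simp: S_def)
  ultimately show ?thesis
    using assms(2) card_inj_on_le finite_imageD finite_subset by metis
qed

definition gen_cyl :: "nat \<Rightarrow> nat \<Rightarrow> cylinder \<Rightarrow> cylinder" where
  "gen_cyl r k c = (if fst c < k then c else if fst c < k + r then (k, (fst c - k) # snd c)
                    else (fst c - (r - 1), snd c))"

lemma gen_action_cyl_point: "gen_action r (k, False) (cyl_point c s) = cyl_point (gen_cyl r k c) s"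
  by (cases c) (auto simp: cyl_point_def gen_cyl_def prepend_append[of "[_]", symmetric])

lemma carets_gen_action_pos: "carets r (gen_action r (k, False)) = {}"
  unfolding carets_def affine_on_def using gen_action_cyl_point by blast

lemma carets_gen_action_neg: "carets r (gen_action r (k, True)) \<subseteq> {(k, [])}"
proof
  fix c assume c: "c \<in> carets r (gen_action r (k, True))"
  obtain n v where c_eq: "c = (n, v)" by (cases c)
  have "gen_action r (k, True) (cyl_point (n, a # v') s) = cyl_point (k + a, v') s" if "n = k" for a v' s
    using that by (simp add: cyl_point_def)
  moreover have "gen_action r (k, True) (cyl_point (n, v) s)
      = cyl_point (if n < k then n else n + (r - 1), v) s" if "n \<noteq> k" for s
    using that by (simp add: cyl_point_def)
  ultimately have "c \<noteq> (k, []) \<Longrightarrow> affine_on r (gen_action r (k, True)) c"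
    unfolding affine_on_def c_eq by (cases v) (auto, blast+)
  then show "c \<in> {(k, [])}" using c by (auto simp: carets_def)
qed

lemma finite_card_carets_gen_action:
  "finite (carets r (gen_action r l)) \<and> card (carets r (gen_action r l)) \<le> 1"
proof (cases l)
  case (Pair k b)
  show ?thesis
  proof (cases b)
    case True
    have "carets r (gen_action r l) \<subseteq> {(k, [])}" using carets_gen_action_neg Pair True by simp
    then show ?thesis by (metis card.empty card.insert finite.emptyI finite.insertI card_mono
        finite_subset empty_iff One_nat_def)
  qed (simp add: Pair carets_gen_action_pos)
qed

lemma carets_word_action_Nil [simp]: "carets r (word_action r []) = {}"
  unfolding carets_def affine_on_def by auto

lemma finite_card_carets_word_action:
  assumes r: "r \<ge> 2"
  shows "finite (carets r (word_action r w)) \<and> card (carets r (word_action r w)) \<le> length w"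
proof (induction w)
  case (Cons l w)
  let ?S = "{c. valid_cyl r c \<and> affine_on r (word_action r w) c
              \<and> cyl_image r (word_action r w) c \<in> carets r (gen_action r l)}"
  have S: "finite ?S \<and> card ?S \<le> 1"
    using finite_card_cyl_image_preimage[OF r, where w = w and B = "carets r (gen_action r l)"]
      finite_card_carets_gen_action[of r l] by linarith
  have "carets r (gen_action r l \<circ> word_action r w) \<subseteq> carets r (word_action r w) \<union> ?S"
    by (rule carets_comp_subset[OF r]) (use r valid_point_word_action in auto)
  then have sub: "carets r (word_action r (l # w)) \<subseteq> carets r (word_action r w) \<union> ?S"
    by (simp add: word_action_Cons_comp)
  have fin: "finite (carets r (word_action r w) \<union> ?S)" using Cons S by simp
  have "card (carets r (word_action r (l # w))) \<le> card (carets r (word_action r w) \<union> ?S)"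
    using card_mono[OF fin sub] .
  also have "\<dots> \<le> card (carets r (word_action r w)) + card ?S" by (rule card_Un_le)
  finally show ?case using Cons S finite_subset[OF sub fin] by (simp del: word_action.simps)
qed (simp del: word_action.simps)

definition translates_beyond :: "nat \<Rightarrow> (point \<Rightarrow> point) \<Rightarrow> nat \<Rightarrow> int \<Rightarrow> bool" where
  "translates_beyond r f M T \<longleftrightarrow>
     (\<forall>n s. M \<le> n \<longrightarrow> digits r s \<longrightarrow> int n + T \<ge> 0 \<and> f (n, s) = (nat (int n + T), s))"

lemma gen_action_translates_beyond:
  assumes "r \<ge> 1" and "fst l < K"
  shows "\<exists>T. translates_beyond r (gen_action r l) (K + r) T"
proof (cases l)
  case (Pair k b)
  show ?thesis
  proof (cases b)
    case True
    then have "translates_beyond r (gen_action r l) (K + r) (int (r - 1))"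
      using assms Pair by (auto simp: translates_beyond_def nat_int_add)
    then show ?thesis ..
  next
    case False
    then have "translates_beyond r (gen_action r l) (K + r) (- int (r - 1))"
      using assms Pair by (auto simp: translates_beyond_def of_nat_diff)
    then show ?thesis ..
  qed
qed

lemma word_action_translates_beyond:
  assumes r: "r \<ge> 1" and "\<forall>l\<in>set w. fst l < K"
  shows "\<exists>T. translates_beyond r (word_action r w) (length w * (K + r)) T"
  using assms(2)
proof (induction w)
  case Nil
  have "translates_beyond r (word_action r []) 0 0" by (simp add: translates_beyond_def)
  then show ?case by (metis list.size(3) mult_0)
next
  case (Cons l w)
  let ?M = "length w * (K + r)"
  obtain T where T: "translates_beyond r (word_action r w) ?M T" using Cons by auto
  obtain t where t: "translates_beyond r (gen_action r l) (K + r) t"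
    using gen_action_translates_beyond[OF r, of l K] Cons.prems by auto
  have "translates_beyond r (word_action r (l # w)) (?M + (K + r)) (T + t)"
    unfolding translates_beyond_def
  proof (intro allI impI)
    fix n s assume n: "?M + (K + r) \<le> n" and s: "digits r s"
    have T_n: "int n + T \<ge> 0" "word_action r w (n, s) = (nat (int n + T), s)"
      using T n s unfolding translates_beyond_def by auto
    have "int ?M + T \<ge> 0"
      using T digits_const[of 0 r] r unfolding translates_beyond_def by auto
    then have "K + r \<le> nat (int n + T)" using n by linarith
    then have "int (nat (int n + T)) + t \<ge> 0"
      and "gen_action r l (nat (int n + T), s) = (nat (int (nat (int n + T)) + t), s)"
      using t s unfolding translates_beyond_def by auto
    then show "int n + (T + t) \<ge> 0 \<and> word_action r (l # w) (n, s) = (nat (int n + (T + t)), s)"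
      using T_n by (simp add: add.assoc)
  qed
  moreover have "length (l # w) * (K + r) = ?M + (K + r)" by simp
  ultimately show ?case by metis
qed

lemma carets_translates_beyond: "translates_beyond r f M T \<Longrightarrow> carets r f \<subseteq> {c. fst c < M}"
proof
  fix c assume t: "translates_beyond r f M T" and c: "c \<in> carets r f"
  show "c \<in> {c. fst c < M}"
  proof (rule ccontr)
    assume "c \<notin> {c. fst c < M}"
    moreover have "valid_cyl r c" using c by (simp add: carets_def)
    ultimately have "\<forall>s. digits r s \<longrightarrow> f (cyl_point c s) = cyl_point (nat (int (fst c) + T), snd c) s"
      using t by (auto simp: translates_beyond_def cyl_point_def valid_cyl_def)
    then show False using c by (auto simp: carets_def affine_on_def)
  qed
qed

lemma carets_word_action_roots:
  "r \<ge> 1 \<Longrightarrow> \<forall>l\<in>set w. fst l < K \<Longrightarrow> carets r (word_action r w) \<subseteq> {c. fst c < length w * (K + r)}"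
  using word_action_translates_beyond carets_translates_beyond by metis

section \<open>Positive words and the seminormal form\<close>

definition pos_word :: "nat list \<Rightarrow> letter list" where
  "pos_word xs = map (\<lambda>i. (i, False)) xs"

lemma pos_word_simps [simp]:
  "pos_word [] = []" "pos_word (i # xs) = (i, False) # pos_word xs"
  "pos_word (xs @ ys) = pos_word xs @ pos_word ys" "length (pos_word xs) = length xs"
  by (simp_all add: pos_word_def)

lemma fr_eq_swap_neg_pos_less:
  assumes "k < i" shows "fr_eq r [(k, True), (i, False)] [(i + r - 1, False), (k, True)]"
proof -
  have "fr_eq r [(k, True), (i, False)] ([(k, True), (i, False), (k, False)] @ [(k, True)])"
    using fr_eq_insert_pair[of r "[(k, True), (i, False)]" "[]" k False] by simp
  also have "fr_eq r \<dots> ([(i + r - 1, False)] @ [(k, True)])"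
    using fr_eq_context[OF fr_eq_rel_word[OF assms], where x = "[]"] by simp
  finally show ?thesis by simp
qed

lemma fr_eq_swap_neg_pos_greater:
  assumes "i < k" shows "fr_eq r [(k, True), (i, False)] [(i, False), (k + r - 1, True)]"
proof -
  have "fr_eq r [(k, True), (i, False)] ([(i, False)] @ [(i, True), (k, True), (i, False)])"
    using fr_eq_insert_pair[of r "[]" "[(k, True), (i, False)]" i False] by simp
  also have "fr_eq r \<dots> ([(i, False)] @ [(k + r - 1, True)])"
    using fr_eq_context[OF fr_eq_rel_word_inv[OF assms], where x = "[(i, False)]" and y = "[]"]
    by simp
  finally show ?thesis by simp
qed

lemma fr_eq_swap_pos_pos_greater:
  assumes "i < k" shows "fr_eq r [(k, False), (i, False)] [(i, False), (k + r - 1, False)]"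
proof -
  have "fr_eq r [(k, False), (i, False)] ([(i, False)] @ [(i, True), (k, False), (i, False)])"
    using fr_eq_insert_pair[of r "[]" "[(k, False), (i, False)]" i False] by simp
  also have "fr_eq r \<dots> ([(i, False)] @ [(k + r - 1, False)])"
    using fr_eq_context[OF fr_eq_rel_word[OF assms], where x = "[(i, False)]" and y = "[]"]
    by simp
  finally show ?thesis by simp
qed

lemma fr_eq_two_letters: "fr_eq r [a, b] [c, d] \<Longrightarrow> fr_eq r (a # b # w) (c # d # w)"
  using fr_eq_context[of r "[a, b]" "[c, d]" "[]" w] by simp

lemma fr_eq_neg_pos_word: "\<exists>P N. fr_eq r ((k, True) # pos_word xs) (pos_word P @ winv (pos_word N))"
proof (induction xs arbitrary: k)
  case Nil
  have "fr_eq r ((k, True) # pos_word []) (pos_word [] @ winv (pos_word [k]))"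
    by (simp add: fr_eq.refl)
  then show ?case by blast
next
  case (Cons i xs)
  consider "i = k" | "k < i" | "i < k" by linarith
  then show ?case
  proof cases
    case 1
    then have "fr_eq r ((k, True) # pos_word (i # xs)) (pos_word xs @ winv (pos_word []))"
      using fr_eq.cancel[of r "[]" k True "pos_word xs"] by simp
    then show ?thesis by blast
  next
    case 2
    obtain P N where "fr_eq r ((k, True) # pos_word xs) (pos_word P @ winv (pos_word N))"
      using Cons.IH by blast
    then have "fr_eq r ((k, True) # pos_word (i # xs)) (pos_word ((i + r - 1) # P) @ winv (pos_word N))"
      using fr_eq_two_letters[OF fr_eq_swap_neg_pos_less[OF 2]] fr_eq_Cons fr_eq.trans by fastforce
    then show ?thesis by blast
  next
    case 3
    obtain P N where "fr_eq r ((k + r - 1, True) # pos_word xs) (pos_word P @ winv (pos_word N))"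
      using Cons.IH by blast
    then have "fr_eq r ((k, True) # pos_word (i # xs)) (pos_word (i # P) @ winv (pos_word N))"
      using fr_eq_two_letters[OF fr_eq_swap_neg_pos_greater[OF 3]] fr_eq_Cons fr_eq.trans by fastforce
    then show ?thesis by blast
  qed
qed

lemma fr_eq_seminormal_form: "\<exists>P N. fr_eq r w (pos_word P @ winv (pos_word N))"
proof (induction w)
  case Nil
  have "fr_eq r [] (pos_word [] @ winv (pos_word []))" by (simp add: fr_eq.refl)
  then show ?case by blast
next
  case (Cons l w)
  obtain P N where PN: "fr_eq r w (pos_word P @ winv (pos_word N))" using Cons by blast
  obtain k b where l: "l = (k, b)" by (cases l)
  show ?case
  proof (cases b)
    case False
    then have "fr_eq r (l # w) (pos_word (k # P) @ winv (pos_word N))" using fr_eq_Cons[OF PN] l by simp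
    then show ?thesis by blast
  next
    case True
    obtain P' N' where "fr_eq r ((k, True) # pos_word P) (pos_word P' @ winv (pos_word N'))"
      using fr_eq_neg_pos_word by blast
    from fr_eq_append[OF this fr_eq.refl[of r "winv (pos_word N)"]]
    have "fr_eq r ((k, True) # pos_word P @ winv (pos_word N)) (pos_word P' @ winv (pos_word (N @ N')))"
      by simp
    then have "fr_eq r (l # w) (pos_word P' @ winv (pos_word (N @ N')))"
      using fr_eq_Cons[OF PN] l True fr_eq.trans by fastforce
    then show ?thesis by blast
  qed
qed

text \<open>Sorting a positive word with the relation \<open>x\<^sub>k x\<^sub>i = x\<^sub>i x\<^bsub>k+r-1\<^esub>\<close> (\<open>i < k\<close>):
  a letter moving to the right grows by \<open>r - 1\<close> each time it passes a smaller one.\<close>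

fun shift_insert :: "nat \<Rightarrow> nat \<Rightarrow> nat list \<Rightarrow> nat list" where
  "shift_insert r k [] = [k]"
| "shift_insert r k (i # xs) = (if k \<le> i then k # i # xs else i # shift_insert r (k + r - 1) xs)"

fun shift_sort :: "nat \<Rightarrow> nat list \<Rightarrow> nat list" where
  "shift_sort r [] = []"
| "shift_sort r (k # xs) = shift_insert r k (shift_sort r xs)"

lemma fr_eq_shift_insert: "fr_eq r (pos_word (k # xs)) (pos_word (shift_insert r k xs))"
proof (induction xs arbitrary: k)
  case (Cons i xs)
  show ?case
  proof (cases "k \<le> i")
    case False
    then have "fr_eq r ((k, False) # (i, False) # pos_word xs) ((i, False) # (k + r - 1, False) # pos_word xs)"
      using fr_eq_two_letters[OF fr_eq_swap_pos_pos_greater] by simp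
    then show ?thesis using False fr_eq_Cons[OF Cons.IH] fr_eq.trans by fastforce
  qed (simp add: fr_eq.refl)
qed (simp add: fr_eq.refl)

lemma set_shift_insert: "r \<ge> 1 \<Longrightarrow> x \<in> set (shift_insert r k xs) \<Longrightarrow> x \<in> set xs \<or> k \<le> x"
  by (induction xs arbitrary: k) (auto split: if_splits, fastforce)

lemma sorted_shift_insert: "r \<ge> 1 \<Longrightarrow> sorted xs \<Longrightarrow> sorted (shift_insert r k xs)"
proof (induction xs arbitrary: k)
  case (Cons i xs)
  show ?case
  proof (cases "k \<le> i")
    case False
    then have "\<forall>x\<in>set (shift_insert r (k + r - 1) xs). i \<le> x"
      using set_shift_insert[of r _ "k + r - 1" xs] Cons.prems by fastforce
    then show ?thesis using Cons False by simp
  qed (use Cons.prems in \<open>auto intro: order_trans\<close>)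
qed simp

lemma length_shift_insert [simp]: "length (shift_insert r k xs) = Suc (length xs)"
  by (induction xs arbitrary: k) auto

lemma fr_eq_shift_sort: "fr_eq r (pos_word xs) (pos_word (shift_sort r xs))"
proof (induction xs)
  case (Cons k xs)
  then show ?case
    using fr_eq_Cons[OF Cons.IH, of "(k, False)"] fr_eq_shift_insert[of r k "shift_sort r xs"]
      fr_eq.trans by fastforce
qed (simp add: fr_eq.refl)

lemma sorted_shift_sort: "r \<ge> 1 \<Longrightarrow> sorted (shift_sort r xs)"
  by (induction xs) (auto simp: sorted_shift_insert)

lemma length_shift_sort [simp]: "length (shift_sort r xs) = length xs"
  by (induction xs) auto

section \<open>Faithfulness of the action\<close>

lemma carets_word_action_pos_word: "r \<ge> 2 \<Longrightarrow> carets r (word_action r (pos_word N)) = {}"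
proof (induction N)
  case (Cons i N)
  have "word_action r (pos_word (i # N)) = gen_action r (i, False) \<circ> word_action r (pos_word N)"
    by (simp add: fun_eq_iff)
  then have "carets r (word_action r (pos_word (i # N))) \<subseteq> carets r (word_action r (pos_word N))
    \<union> {c. valid_cyl r c \<and> affine_on r (word_action r (pos_word N)) c
        \<and> cyl_image r (word_action r (pos_word N)) c \<in> carets r (gen_action r (i, False))}"
    using carets_comp_subset[OF Cons.prems] valid_point_word_action Cons.prems by simp
  then show ?case using Cons carets_gen_action_pos[of r i] by blast
qed simp

lemma word_action_inv_pos_word_Cons:
  "word_action r (winv (pos_word (i # a))) = word_action r (winv (pos_word a)) \<circ> gen_action r (i, True)"
  by (simp add: fun_eq_iff)

lemma root_mem_carets_inv_pos_word:
  assumes r: "r \<ge> 2"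
  shows "(i, []) \<in> carets r (word_action r (winv (pos_word (i # a))))"
proof -
  have r1: "r \<ge> 1" using r by simp
  have "\<not> affine_on r (word_action r (winv (pos_word (i # a)))) (i, [])"
  proof
    assume "affine_on r (word_action r (winv (pos_word (i # a)))) (i, [])"
    then obtain c where c: "\<And>s. digits r s \<Longrightarrow> word_action r (winv (pos_word a)) (i + s 0, tail_seq s) = cyl_point c s"
      by (auto simp: affine_on_def word_action_inv_pos_word_Cons cyl_point_def)
    have z: "digits r (\<lambda>_. 0)" and o: "digits r (\<lambda>_. 1)" using r by (simp_all add: digits_const)
    have "valid_point r (i + 0, tail_seq (\<lambda>_. 0))" using z by (simp add: valid_point_def)
    then have "valid_point r (cyl_point c (\<lambda>_. 0))"
      using c[OF z] valid_point_word_action[OF r1] by metis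
    then have "valid_cyl r c" by simp
    then have affine: "affine_on r (word_action r (pos_word a)) c"
      using carets_word_action_pos_word[OF r, of a] unfolding carets_def by blast
    \<comment> \<open>then \<open>x\<^sub>i\<inverse>\<close> would be affine on \<open>(i, [])\<close>, but it sends the points \<open>(i, 0 0 \<dots>)\<close>
       and \<open>(i, 1 1 \<dots>)\<close> into the different trees \<open>i\<close> and \<open>i + 1\<close>\<close>
    have key: "(i + s 0, tail_seq s) = cyl_point (cyl_image r (word_action r (pos_word a)) c) s"
      if s: "digits r s" for s
    proof -
      have "(i + s 0, tail_seq s) = word_action r (pos_word a) (word_action r (winv (pos_word a)) (i + s 0, tail_seq s))"
        using word_action_winv'[OF r1] s by (simp add: valid_point_def)
      also have "\<dots> = cyl_point (cyl_image r (word_action r (pos_word a)) c) s"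
        using c[OF s] cyl_image[OF r affine s] by simp
      finally show ?thesis .
    qed
    have "i + 0 = i + 1"
      using key[OF z] key[OF o] by (simp add: cyl_point_def)
    then show False by simp
  qed
  then show ?thesis by (simp add: carets_def valid_cyl_def)
qed

lemma carets_inv_pos_word_roots_ge:
  assumes r: "r \<ge> 2" and "\<forall>x\<in>set a. m \<le> x"
  shows "carets r (word_action r (winv (pos_word a))) \<subseteq> {c. m \<le> fst c}"
  using assms(2)
proof (induction a)
  case (Cons i a)
  have IH: "carets r (word_action r (winv (pos_word a))) \<subseteq> {c. m \<le> fst c}" and "m \<le> i"
    using Cons by simp_all
  have sub: "carets r (word_action r (winv (pos_word (i # a)))) \<subseteq> carets r (gen_action r (i, True)) \<union>
     {c. valid_cyl r c \<and> affine_on r (gen_action r (i, True)) c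
         \<and> cyl_image r (gen_action r (i, True)) c \<in> carets r (word_action r (winv (pos_word a)))}"
    unfolding word_action_inv_pos_word_Cons
    by (rule carets_comp_subset[OF r]) (use r valid_point_gen_action in auto)
  show ?case
  proof
    fix c assume c: "c \<in> carets r (word_action r (winv (pos_word (i # a))))"
    show "c \<in> {c. m \<le> fst c}"
    proof (cases "c \<in> carets r (gen_action r (i, True)) \<or> i \<le> fst c")
      case True
      then show ?thesis using carets_gen_action_neg \<open>m \<le> i\<close> by fastforce
    next
      case False
      then have "\<forall>s. digits r s \<longrightarrow> gen_action r (i, True) (cyl_point c s) = cyl_point c s"
        by (simp add: cyl_point_def)
      then have "cyl_image r (gen_action r (i, True)) c = c" using cyl_image_eqI[OF r] by blast
      then show ?thesis using sub c False IH by auto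
    qed
  qed
qed simp

text \<open>The first letter of a sorted positive word \<open>N\<close> is the least root of a caret of \<open>N\<inverse>\<close>.\<close>

lemma pos_word_action_inject:
  assumes r: "r \<ge> 2"
  shows "sorted a \<Longrightarrow> sorted b \<Longrightarrow>
    (\<And>x. valid_point r x \<Longrightarrow> word_action r (pos_word a) x = word_action r (pos_word b) x) \<Longrightarrow> a = b"
proof (induction a arbitrary: b)
  case Nil
  have "carets r (word_action r (winv (pos_word b))) = {}"
    using carets_cong[of r "word_action r (winv (pos_word b))" "word_action r []"]
      word_action_winv_cong[of r "pos_word b" "pos_word []"] Nil.prems(3) r by simp
  then show ?case using root_mem_carets_inv_pos_word[OF r] by (cases b) auto
next
  case (Cons i a)
  have r1: "r \<ge> 1" using r by simp
  have inv_eq: "carets r (word_action r (winv (pos_word (i # a)))) = carets r (word_action r (winv (pos_word b)))"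
    using carets_cong word_action_winv_cong[OF r1 Cons.prems(3)] by blast
  then obtain j b' where b: "b = j # b'"
    using root_mem_carets_inv_pos_word[OF r, of i a] by (cases b) auto
  have "j \<le> i"
    using inv_eq root_mem_carets_inv_pos_word[OF r, of i a]
      carets_inv_pos_word_roots_ge[OF r, of "j # b'" j] Cons.prems(2) b by auto
  moreover have "i \<le> j"
    using inv_eq root_mem_carets_inv_pos_word[OF r, of j b']
      carets_inv_pos_word_roots_ge[OF r, of "i # a" i] Cons.prems(1) b by auto
  ultimately have ij: "i = j" by simp
  have "word_action r (pos_word a) x = word_action r (pos_word b') x" if x: "valid_point r x" for x
    using Cons.prems(3)[OF x] gen_action_inverse[OF r1 valid_point_word_action[OF r1 x], of i False]
    by (metis b ij pos_word_simps(2) word_action.simps(2))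
  then have "a = b'" using Cons b by simp
  then show ?case using ij b by simp
qed

lemma word_action_faithful:
  assumes r: "r \<ge> 2" and id: "\<And>x. valid_point r x \<Longrightarrow> word_action r w x = x"
  shows "fr_eq r w []"
proof -
  have r1: "r \<ge> 1" using r by simp
  obtain P N where PN: "fr_eq r w (pos_word P @ winv (pos_word N))"
    using fr_eq_seminormal_form by blast
  have "word_action r (pos_word P) y = word_action r (pos_word N) y" if y: "valid_point r y" for y
  proof -
    have "valid_point r (word_action r (pos_word N) y)" using valid_point_word_action[OF r1 y] .
    then show ?thesis
      using id word_action_fr_eq[OF PN r1] word_action_winv[OF r1 y] by fastforce
  qed
  then have "word_action r (pos_word (shift_sort r P)) y = word_action r (pos_word (shift_sort r N)) y"
    if "valid_point r y" for y
    using that word_action_fr_eq[OF fr_eq_shift_sort r1] by metis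
  then have "shift_sort r P = shift_sort r N"
    using pos_word_action_inject[OF r] sorted_shift_sort[OF r1] by blast
  then have "fr_eq r (pos_word P) (pos_word N)"
    using fr_eq_shift_sort[of r P] fr_eq_shift_sort[of r N] by (metis fr_eq.sym fr_eq.trans)
  then have "fr_eq r (pos_word P @ winv (pos_word N)) (pos_word N @ winv (pos_word N))"
    using fr_eq_append fr_eq.refl by blast
  then show ?thesis using PN fr_eq_append_winv fr_eq.trans by blast
qed

section \<open>Leaf words\<close>

definition prefix_closed :: "cylinder set \<Rightarrow> bool" where
  "prefix_closed F \<longleftrightarrow> (\<forall>c\<in>F. snd c \<noteq> [] \<longrightarrow> (fst c, butlast (snd c)) \<in> F)"

definition leaf :: "nat \<Rightarrow> cylinder set \<Rightarrow> cylinder \<Rightarrow> bool" where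
  "leaf r F l \<longleftrightarrow> valid_cyl r l \<and> l \<notin> F \<and> (snd l = [] \<or> (fst l, butlast (snd l)) \<in> F)"

text \<open>The word \<open>N\<close> builds the forest with caret set \<open>F\<close>: it carries the trees rigidly onto the
  leaves of \<open>F\<close>.\<close>

definition leaf_word :: "nat \<Rightarrow> letter list \<Rightarrow> cylinder set \<Rightarrow> bool" where
  "leaf_word r N F \<longleftrightarrow>
     (\<forall>n. \<exists>l. leaf r F l \<and> (\<forall>s. digits r s \<longrightarrow> word_action r N (n, s) = cyl_point l s))
   \<and> (\<forall>l. leaf r F l \<longrightarrow> (\<exists>n. \<forall>s. digits r s \<longrightarrow> word_action r N (n, s) = cyl_point l s))"

lemma prefix_closed_carets: "prefix_closed (carets r f)"
  unfolding prefix_closed_def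
proof (intro ballI impI)
  fix c assume c: "c \<in> carets r f" and ne: "snd c \<noteq> []"
  have "valid_cyl r (fst c, butlast (snd c))"
    using c by (auto simp: carets_def valid_cyl_def dest: in_set_butlastD)
  moreover have "\<not> affine_on r f (fst c, butlast (snd c))"
    using affine_on_append[of r f "fst c" "butlast (snd c)" "[last (snd c)]"] c ne
    by (auto simp: carets_def valid_cyl_def)
  ultimately show "(fst c, butlast (snd c)) \<in> carets r f" by (simp add: carets_def)
qed

lemma leaf_word_tree_unique:
  assumes "r \<ge> 2"
    and "\<forall>s. digits r s \<longrightarrow> word_action r N (n, s) = cyl_point l s"
    and "\<forall>s. digits r s \<longrightarrow> word_action r N (m, s) = cyl_point l s"
  shows "n = m"
  using assms word_action_inj[of r "(n, \<lambda>_. 0)" "(m, \<lambda>_. 0)" N] digits_const[of 0 r]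
  by (simp add: valid_point_def)

context
  fixes r N F c j
  assumes r: "r \<ge> 2" and N: "leaf_word r (pos_word N) F" and c: "leaf r F c"
    and closed: "prefix_closed F"
    and j: "\<forall>s. digits r s \<longrightarrow> word_action r (pos_word N) (j, s) = cyl_point c s"
begin

lemma leaf_word_snoc_child:
  assumes "a < r"
  shows "leaf r (insert c F) (fst c, snd c @ [a])"
    and "\<forall>s. digits r s \<longrightarrow> word_action r (pos_word (N @ [j])) (j + a, s) = cyl_point (fst c, snd c @ [a]) s"
proof -
  have "(fst c, snd c @ [a]) \<noteq> c" by (metis length_append_singleton n_not_Suc_n snd_conv)
  moreover have "(fst c, snd c @ [a]) \<notin> F"
  proof
    assume "(fst c, snd c @ [a]) \<in> F"
    then have "c \<in> F" using closed unfolding prefix_closed_def by force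
    then show False using c by (simp add: leaf_def)
  qed
  ultimately show "leaf r (insert c F) (fst c, snd c @ [a])" using c assms by (auto simp: leaf_def valid_cyl_def)
  show "\<forall>s. digits r s \<longrightarrow> word_action r (pos_word (N @ [j])) (j + a, s) = cyl_point (fst c, snd c @ [a]) s"
    using j assms cyl_point_append[of "fst c" "snd c" "[a]"] by simp
qed

lemma leaf_word_other_leaf:
  assumes "\<forall>s. digits r s \<longrightarrow> word_action r (pos_word N) (n, s) = cyl_point l s" and "n \<noteq> j"
  shows "l \<noteq> c"
  using leaf_word_tree_unique[OF r assms(1)] j assms(2) by blast

lemma leaf_word_snoc_tree:
  "\<exists>l. leaf r (insert c F) l \<and> (\<forall>s. digits r s \<longrightarrow> word_action r (pos_word (N @ [j])) (n, s) = cyl_point l s)"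
proof -
  consider "n < j" | "j \<le> n" "n < j + r" | "j + r \<le> n" by linarith
  then show ?thesis
  proof cases
    case 2
    then have "n - j < r" "j + (n - j) = n" by linarith+
    then show ?thesis using leaf_word_snoc_child[OF \<open>n - j < r\<close>] by metis
  next
    case 1
    obtain l where l: "leaf r F l"
      and n: "\<forall>s. digits r s \<longrightarrow> word_action r (pos_word N) (n, s) = cyl_point l s"
      using N unfolding leaf_word_def by blast
    have "leaf r (insert c F) l" using l leaf_word_other_leaf[OF n] 1 by (auto simp: leaf_def)
    moreover have "\<forall>s. digits r s \<longrightarrow> word_action r (pos_word (N @ [j])) (n, s) = cyl_point l s"
      using n 1 by simp
    ultimately show ?thesis by blast
  next
    case 3
    obtain l where l: "leaf r F l"
      and n: "\<forall>s. digits r s \<longrightarrow> word_action r (pos_word N) (n - (r - 1), s) = cyl_point l s"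
      using N unfolding leaf_word_def by blast
    have "n - (r - 1) \<noteq> j" using 3 r by linarith
    then have "leaf r (insert c F) l" using l leaf_word_other_leaf[OF n] by (auto simp: leaf_def)
    moreover have "\<forall>s. digits r s \<longrightarrow> word_action r (pos_word (N @ [j])) (n, s) = cyl_point l s"
      using n 3 by simp
    ultimately show ?thesis by blast
  qed
qed

lemma leaf_word_snoc_leaf:
  assumes l: "leaf r (insert c F) l"
  shows "\<exists>n. \<forall>s. digits r s \<longrightarrow> word_action r (pos_word (N @ [j])) (n, s) = cyl_point l s"
proof (cases "snd l \<noteq> [] \<and> (fst l, butlast (snd l)) = c")
  case True
  then have "l = (fst c, snd c @ [last (snd l)])" and "last (snd l) < r"
    using l append_butlast_last_id[of "snd l"] by (auto simp: leaf_def valid_cyl_def prod_eq_iff)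
  then show ?thesis using leaf_word_snoc_child(2) by metis
next
  case False
  then have "leaf r F l" using l by (auto simp: leaf_def)
  then obtain n where n: "\<forall>s. digits r s \<longrightarrow> word_action r (pos_word N) (n, s) = cyl_point l s"
    using N unfolding leaf_word_def by blast
  have "n \<noteq> j" using n j l cyl_point_inject[OF r] by (metis insertI1 leaf_def)
  show ?thesis
  proof (cases "n < j")
    case True
    then show ?thesis using n by auto
  next
    case False
    then have "\<not> n + (r - 1) < j" "\<not> n + (r - 1) < j + r" using \<open>n \<noteq> j\<close> r by linarith+
    then show ?thesis using n by (intro exI[of _ "n + (r - 1)"]) auto
  qed
qed

end

lemma leaf_word_insert:
  assumes "r \<ge> 2" and N: "leaf_word r (pos_word N) F" and c: "leaf r F c" and "prefix_closed F"
  shows "\<exists>j. leaf_word r (pos_word (N @ [j])) (insert c F)"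
proof -
  obtain j where "\<forall>s. digits r s \<longrightarrow> word_action r (pos_word N) (j, s) = cyl_point c s"
    using N c unfolding leaf_word_def by blast
  then show ?thesis
    using leaf_word_snoc_tree[OF assms] leaf_word_snoc_leaf[OF assms] unfolding leaf_word_def by blast
qed

lemma leaf_word_empty: "leaf_word r (pos_word []) {}"
  unfolding leaf_word_def leaf_def
proof (intro conjI allI impI)
  fix n
  show "\<exists>l. (valid_cyl r l \<and> l \<notin> {} \<and> (snd l = [] \<or> (fst l, butlast (snd l)) \<in> {})) \<and>
      (\<forall>s. digits r s \<longrightarrow> word_action r (pos_word []) (n, s) = cyl_point l s)"
    by (rule exI[of _ "(n, [])"]) (simp add: valid_cyl_def cyl_point_def)
next
  fix l :: cylinder assume "valid_cyl r l \<and> l \<notin> {} \<and> (snd l = [] \<or> (fst l, butlast (snd l)) \<in> {})"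
  then show "\<exists>n. \<forall>s. digits r s \<longrightarrow> word_action r (pos_word []) (n, s) = cyl_point l s"
    by (intro exI[of _ "fst l"]) (simp add: cyl_point_def)
qed

lemma leaf_word_exists:
  assumes r: "r \<ge> 2" and "finite F" and "F \<subseteq> {c. valid_cyl r c}" and "prefix_closed F"
  shows "\<exists>N. length N = card F \<and> leaf_word r (pos_word N) F"
  using assms(2-)
proof (induction "card F" arbitrary: F)
  case 0
  then show ?case using leaf_word_empty by auto
next
  case (Suc k)
  \<comment> \<open>remove a deepest caret \<open>c\<close>; it is a leaf of the remaining forest\<close>
  have "F \<noteq> {}" using Suc.hyps(2) by auto
  then obtain c where c: "c \<in> F" and "length (snd c) = Max ((\<lambda>c. length (snd c)) ` F)"
    using Max_in[of "(\<lambda>c. length (snd c)) ` F"] Suc.prems(1) by (metis (no_types, lifting)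
        finite_imageI image_iff image_is_empty)
  then have deepest: "\<And>c'. c' \<in> F \<Longrightarrow> length (snd c') \<le> length (snd c)"
    using Suc.prems(1) by simp
  let ?F = "F - {c}"
  have parent_ne: "(fst c', butlast (snd c')) \<noteq> c" if "c' \<in> F" "snd c' \<noteq> []" for c'
    using deepest[OF that(1)] that(2) by (cases "snd c'" rule: rev_cases) auto
  have closed: "prefix_closed ?F"
    using Suc.prems(3) parent_ne unfolding prefix_closed_def by blast
  have "leaf r ?F c"
    using Suc.prems c parent_ne[OF c] unfolding prefix_closed_def leaf_def by auto
  moreover have "k = card ?F" "finite ?F" "?F \<subseteq> {c. valid_cyl r c}"
    using Suc.hyps(2) Suc.prems(1,2) c by auto
  then obtain N where N: "length N = card ?F" "leaf_word r (pos_word N) ?F"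
    using Suc.hyps(1) closed by blast
  ultimately obtain j where "leaf_word r (pos_word (N @ [j])) (insert c ?F)"
    using leaf_word_insert[OF r _ _ closed] by blast
  moreover have "insert c ?F = F" "length (N @ [j]) = card F"
    using c N(1) Suc.hyps(2) \<open>k = card ?F\<close> by auto
  ultimately show ?case by metis
qed

lemma carets_inv_leaf_word:
  assumes r: "r \<ge> 2" and N: "leaf_word r (pos_word N) F"
  shows "carets r (word_action r (winv (pos_word N))) \<subseteq> F"
proof
  fix c assume c: "c \<in> carets r (word_action r (winv (pos_word N)))"
  obtain n0 v where c_eq: "c = (n0, v)" by (cases c)
  have valid: "valid_cyl r c" using c by (simp add: carets_def)
  show "c \<in> F"
  proof (rule ccontr)
    assume "c \<notin> F"
    \<comment> \<open>the shortest prefix of \<open>c\<close> outside \<open>F\<close> is a leaf, which \<open>N\<inverse>\<close> maps rigidly onto a tree\<close>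
    define k where "k = (LEAST k. k \<le> length v \<and> (n0, take k v) \<notin> F)"
    have k: "k \<le> length v" "(n0, take k v) \<notin> F"
      using LeastI[of "\<lambda>k. k \<le> length v \<and> (n0, take k v) \<notin> F" "length v"] \<open>c \<notin> F\<close> c_eq
      by (simp_all add: k_def)
    have "(n0, take (k - 1) v) \<in> F" if "k \<noteq> 0"
      using not_less_Least[of "k - 1" "\<lambda>k. k \<le> length v \<and> (n0, take k v) \<notin> F"] that k
      by (simp add: k_def[symmetric])
    then have "leaf r F (n0, take k v)"
      using valid k c_eq by (auto simp: leaf_def valid_cyl_def butlast_take dest: in_set_takeD)
    then obtain n where n: "\<forall>s. digits r s \<longrightarrow> word_action r (pos_word N) (n, s) = cyl_point (n0, take k v) s"
      using N unfolding leaf_word_def by blast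
    have "word_action r (winv (pos_word N)) (cyl_point c s) = cyl_point (n, drop k v) s"
      if s: "digits r s" for s
    proof -
      have d: "digits r (prepend (drop k v) s)"
        using valid c_eq s by (auto simp: valid_cyl_def dest: in_set_dropD)
      have "cyl_point c s = word_action r (pos_word N) (n, prepend (drop k v) s)"
        using cyl_point_append[of n0 "take k v" "drop k v" s] c_eq n d by simp
      then show ?thesis
        using word_action_winv[of r "(n, prepend (drop k v) s)" "pos_word N"] d r
        by (simp add: valid_point_def cyl_point_def)
    qed
    then have "affine_on r (word_action r (winv (pos_word N))) c" unfolding affine_on_def by blast
    then show False using c by (simp add: carets_def)
  qed
qed

definition lex_less :: "(nat \<Rightarrow> nat) \<Rightarrow> (nat \<Rightarrow> nat) \<Rightarrow> bool" where
  "lex_less s t \<longleftrightarrow> (\<exists>i. (\<forall>j<i. s j = t j) \<and> s i < t i)"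

definition point_less :: "point \<Rightarrow> point \<Rightarrow> bool" where
  "point_less x y \<longleftrightarrow> fst x < fst y \<or> (fst x = fst y \<and> lex_less (snd x) (snd y))"

lemma lex_less_iff: "lex_less s t \<longleftrightarrow> s 0 < t 0 \<or> (s 0 = t 0 \<and> lex_less (tail_seq s) (tail_seq t))"
proof
  assume "lex_less s t"
  then obtain i where i: "\<forall>j<i. s j = t j" "s i < t i" unfolding lex_less_def by blast
  then show "s 0 < t 0 \<or> (s 0 = t 0 \<and> lex_less (tail_seq s) (tail_seq t))"
    unfolding lex_less_def tail_seq_def by (cases i) auto
next
  assume "s 0 < t 0 \<or> (s 0 = t 0 \<and> lex_less (tail_seq s) (tail_seq t))"
  then show "lex_less s t"
  proof
    assume "s 0 = t 0 \<and> lex_less (tail_seq s) (tail_seq t)"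
    then obtain i where "s 0 = t 0" "\<forall>j<i. s (Suc j) = t (Suc j)" "s (Suc i) < t (Suc i)"
      unfolding lex_less_def tail_seq_def by blast
    then show ?thesis unfolding lex_less_def by (metis less_Suc_eq_0_disj)
  qed (auto simp: lex_less_def)
qed

lemma lex_less_prepend_single: "lex_less (prepend [a] s) (prepend [b] t) \<longleftrightarrow> a < b \<or> (a = b \<and> lex_less s t)"
  using lex_less_iff[of "prepend [a] s" "prepend [b] t"] by simp

lemma gen_action_mono:
  assumes r: "r \<ge> 1" and "valid_point r x" "valid_point r y" and xy: "point_less x y"
  shows "point_less (gen_action r l x) (gen_action r l y)"
proof -
  obtain n s m t where x: "x = (n, s)" and y: "y = (m, t)" by (cases x, cases y)
  obtain k b where l: "l = (k, b)" by (cases l)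
  have "s 0 < r" using assms x by (simp add: valid_point_def digits_def)
  show ?thesis
  proof (cases b)
    case False
    then show ?thesis using xy r
      by (auto simp: x y l point_less_def lex_less_prepend_single)
  next
    case True
    then show ?thesis using xy r \<open>s 0 < r\<close> lex_less_iff[of s t]
      by (auto simp: x y l point_less_def)
  qed
qed

lemma word_action_mono:
  "r \<ge> 1 \<Longrightarrow> valid_point r x \<Longrightarrow> valid_point r y \<Longrightarrow> point_less x y
    \<Longrightarrow> point_less (word_action r w x) (word_action r w y)"
  by (induction w) (simp_all add: gen_action_mono valid_point_word_action)

lemma strict_mono_surj_eq_id:
  fixes \<sigma> :: "nat \<Rightarrow> nat"
  assumes "strict_mono \<sigma>" and "surj \<sigma>"
  shows "\<sigma> n = n"
proof -
  have inv: "inv \<sigma> (\<sigma> x) = x" for x using assms(1) by (simp add: strict_mono_imp_inj_on)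
  then have "strict_mono (inv \<sigma>)" using strict_mono_inv[OF assms] by blast
  then have "\<sigma> n \<le> inv \<sigma> (\<sigma> n)" by (rule strict_mono_imp_increasing)
  then show ?thesis using inv strict_mono_imp_increasing[OF assms(1), of n] by simp
qed

lemma leaf_cyl_image_carets:
  assumes r: "r \<ge> 2" and l: "leaf r (carets r (word_action r G)) l"
  shows "leaf r (carets r (word_action r (winv G))) (cyl_image r (word_action r G) l)"
proof -
  have r1: "r \<ge> 1" using r by simp
  let ?f = "word_action r G" and ?g = "word_action r (winv G)"
  define m where "m = cyl_image r ?f l"
  have valid_l: "valid_cyl r l" and affine: "affine_on r ?f l"
    using l by (auto simp: leaf_def carets_def)
  have f_l: "?f (cyl_point l s) = cyl_point m s" if "digits r s" for s
    using cyl_image[OF r affine that] by (simp add: m_def)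
  have valid_m: "valid_cyl r m"
    using valid_cyl_cyl_image[OF r affine valid_l] valid_point_word_action[OF r1] by (simp add: m_def)
  have g_m: "?g (cyl_point m s) = cyl_point l s" if "digits r s" for s
    using f_l[OF that] word_action_winv[OF r1] valid_l that by (metis valid_point_cyl_point)
  have "affine_on r ?g m" using g_m unfolding affine_on_def by blast
  then have "m \<notin> carets r ?g" by (simp add: carets_def)
  moreover have "snd m = [] \<or> (fst m, butlast (snd m)) \<in> carets r ?g"
  proof (rule ccontr)
    assume "\<not> ?thesis"
    then have ne: "snd m \<noteq> []" and parent: "(fst m, butlast (snd m)) \<notin> carets r ?g" by auto
    let ?p = "(fst m, butlast (snd m))" and ?a = "last (snd m)"
    \<comment> \<open>if the parent of \<open>m\<close> were not a caret of \<open>G\<inverse>\<close>, then the parent of \<open>l\<close> would not be one of \<open>G\<close>\<close>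
    have valid_p: "valid_cyl r ?p" using valid_m by (auto simp: valid_cyl_def dest: in_set_butlastD)
    then obtain C where C: "\<forall>s. digits r s \<longrightarrow> ?g (cyl_point ?p s) = cyl_point C s"
      using parent by (auto simp: carets_def affine_on_def)
    have m_eq: "m = (fst ?p, snd ?p @ [?a])" and a: "?a < r"
      using ne valid_m by (simp_all add: valid_cyl_def)
    have "cyl_point l s = cyl_point (fst C, snd C @ [?a]) s" if s: "digits r s" for s
      using g_m[OF s] C a s cyl_point_append[of "fst ?p" "snd ?p" "[?a]" s]
        cyl_point_append[of "fst C" "snd C" "[?a]" s] m_eq by simp
    then have "l = (fst C, snd C @ [?a])" using cyl_point_inject[OF r] by blast
    then have "C \<in> carets r ?f" using l by (auto simp: leaf_def)
    moreover have "?f (cyl_point C s) = cyl_point ?p s" if "digits r s" for s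
      using C that word_action_winv'[OF r1] valid_p by (metis valid_point_cyl_point)
    ultimately show False by (auto simp: carets_def affine_on_def)
  qed
  ultimately show ?thesis using valid_m by (simp add: leaf_def m_def)
qed

context
  fixes r G ND NR
  assumes r: "r \<ge> 2"
    and ND: "leaf_word r (pos_word ND) (carets r (word_action r G))"
    and NR: "leaf_word r (pos_word NR) (carets r (word_action r (winv G)))"
begin

lemma leaf_words_tree_to_tree:
  "\<exists>n'. \<forall>s. digits r s \<longrightarrow> word_action r (winv (pos_word NR) @ G @ pos_word ND) (n, s) = (n', s)"
proof -
  obtain l where l: "leaf r (carets r (word_action r G)) l"
    and n: "\<forall>s. digits r s \<longrightarrow> word_action r (pos_word ND) (n, s) = cyl_point l s"
    using ND unfolding leaf_word_def by blast
  let ?m = "cyl_image r (word_action r G) l"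
  obtain n' where n': "\<forall>s. digits r s \<longrightarrow> word_action r (pos_word NR) (n', s) = cyl_point ?m s"
    using NR leaf_cyl_image_carets[OF r l] unfolding leaf_word_def by blast
  have "affine_on r (word_action r G) l" using l by (simp add: leaf_def carets_def)
  then have "word_action r (winv (pos_word NR) @ G @ pos_word ND) (n, s) = (n', s)" if "digits r s" for s
    using n n' that cyl_image[OF r] word_action_winv[of r "(n', s)" "pos_word NR"] r
    by (simp add: valid_point_def)
  then show ?thesis by blast
qed

text \<open>As \<open>N\<^sub>D\<close> and \<open>N\<^sub>R\<close> build the domain and range forests of \<open>G\<close>, the word
  \<open>N\<^sub>R\<inverse> G N\<^sub>D\<close> moves whole trees rigidly onto trees; being order preserving on ends, it fixes
  every tree.\<close>

lemma word_action_leaf_words_id: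
  assumes x: "valid_point r x"
  shows "word_action r (winv (pos_word NR) @ G @ pos_word ND) x = x"
proof -
  have r1: "r \<ge> 1" using r by simp
  let ?W = "winv (pos_word NR) @ G @ pos_word ND"
  obtain \<sigma> where \<sigma>: "\<And>n s. digits r s \<Longrightarrow> word_action r ?W (n, s) = (\<sigma> n, s)"
    using leaf_words_tree_to_tree by metis
  have z: "digits r (\<lambda>_. 0)" using r by (simp add: digits_const)
  have "strict_mono \<sigma>"
  proof
    fix a b :: nat assume "a < b"
    then have "point_less (a, \<lambda>_. 0) (b, \<lambda>_. 0)" by (simp add: point_less_def)
    then have "point_less (word_action r ?W (a, \<lambda>_. 0)) (word_action r ?W (b, \<lambda>_. 0))"
      using word_action_mono[OF r1] z by (simp add: valid_point_def del: word_action_append)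
    then show "\<sigma> a < \<sigma> b" using \<sigma>[OF z] by (simp add: point_less_def lex_less_def)
  qed
  moreover have "surj \<sigma>"
    unfolding surj_def
  proof
    fix n
    obtain m s where ms: "word_action r (winv ?W) (n, \<lambda>_. 0) = (m, s)" by fastforce
    then have "digits r s"
      using valid_point_word_action[OF r1, of "(n, \<lambda>_. 0)" "winv ?W"] z by (simp add: valid_point_def)
    then have "\<sigma> m = n"
      using word_action_winv'[OF r1, of "(n, \<lambda>_. 0)" ?W] ms z \<sigma>
      by (simp add: valid_point_def del: word_action_append)
    then show "\<exists>m. n = \<sigma> m" by metis
  qed
  ultimately show ?thesis
    using \<sigma> strict_mono_surj_eq_id x by (metis prod.collapse valid_point_def)
qed

end

lemma fr_eq_leaf_words:
  assumes r: "r \<ge> 2"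
    and fin: "finite (carets r (word_action r G))" "finite (carets r (word_action r (winv G)))"
  obtains ND NR where "length ND = card (carets r (word_action r G))"
    and "length NR = card (carets r (word_action r (winv G)))"
    and "carets r (word_action r (winv (pos_word ND))) \<subseteq> carets r (word_action r G)"
    and "carets r (word_action r (winv (pos_word NR))) \<subseteq> carets r (word_action r (winv G))"
    and "fr_eq r G (pos_word NR @ winv (pos_word ND))"
proof -
  have "carets r f \<subseteq> {c. valid_cyl r c}" for f by (auto simp: carets_def)
  then obtain ND NR where ND: "length ND = card (carets r (word_action r G))"
      "leaf_word r (pos_word ND) (carets r (word_action r G))"
    and NR: "length NR = card (carets r (word_action r (winv G)))"
      "leaf_word r (pos_word NR) (carets r (word_action r (winv G)))"
    using leaf_word_exists[OF r] fin prefix_closed_carets by meson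
  have "fr_eq r (winv (pos_word NR) @ G @ pos_word ND) []"
    using word_action_faithful[OF r] word_action_leaf_words_id[OF r ND(2) NR(2)] by blast
  then have "fr_eq r (pos_word NR @ (winv (pos_word NR) @ G @ pos_word ND) @ winv (pos_word ND))
      (pos_word NR @ [] @ winv (pos_word ND))"
    by (rule fr_eq_context)
  moreover have "fr_eq r ((pos_word NR @ winv (pos_word NR)) @ G @ (pos_word ND @ winv (pos_word ND)))
      ([] @ G @ [])"
    using fr_eq_append[OF fr_eq_append_winv fr_eq_append[OF fr_eq.refl fr_eq_append_winv]] by simp
  ultimately have "fr_eq r G (pos_word NR @ winv (pos_word ND))"
    by simp (metis fr_eq.sym fr_eq.trans)
  then show ?thesis
    using that ND NR carets_inv_leaf_word[OF r] by blast
qed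

section \<open>Words in the finite generating set\<close>

lemma gen_cyl_mem_carets_comp:
  assumes r: "r \<ge> 2" and c: "c \<in> carets r f"
  shows "gen_cyl r i c \<in> carets r (f \<circ> gen_action r (i, True))"
proof -
  have valid: "valid_cyl r c" using c by (simp add: carets_def)
  have "gen_action r (i, True) (cyl_point (gen_cyl r i c) s) = cyl_point c s" if "digits r s" for s
    using gen_action_inverse[of r "cyl_point c s" i False] r valid that
    by (simp add: gen_action_cyl_point)
  then have "\<not> affine_on r (f \<circ> gen_action r (i, True)) (gen_cyl r i c)"
    using c unfolding carets_def affine_on_def by auto
  moreover have "valid_cyl r (gen_cyl r i c)" using valid by (auto simp: gen_cyl_def valid_cyl_def)
  ultimately show ?thesis by (simp add: carets_def)
qed

lemma last_le_caret_inv_pos_word: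
  assumes r: "r \<ge> 2"
  shows "a \<noteq> [] \<Longrightarrow>
    \<exists>c\<in>carets r (word_action r (winv (pos_word a))). last a \<le> fst c + (r - 1) * (length a - 1)"
proof (induction a)
  case (Cons i a)
  show ?case
  proof (cases "a = []")
    case True
    then have "last (i # a) \<le> fst (i, []::nat list) + (r - 1) * (length (i # a) - 1)" by simp
    then show ?thesis using root_mem_carets_inv_pos_word[OF r, of i "[]"] True by blast
  next
    case False
    obtain c where c: "c \<in> carets r (word_action r (winv (pos_word a)))"
      and last_a: "last a \<le> fst c + (r - 1) * (length a - 1)"
      using Cons.IH False by blast
    let ?c = "gen_cyl r i c"
    have "?c \<in> carets r (word_action r (winv (pos_word (i # a))))"
      using gen_cyl_mem_carets_comp[OF r c] unfolding word_action_inv_pos_word_Cons .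
    moreover have "last (i # a) \<le> fst ?c + (r - 1) * (length (i # a) - 1)"
    proof -
      have "fst c \<le> fst ?c + (r - 1)" by (auto simp: gen_cyl_def)
      moreover have "length (i # a) - 1 = (length a - 1) + 1" using False by (cases a) auto
      then have "(r - 1) * (length (i # a) - 1) = (r - 1) * (length a - 1) + (r - 1)"
        by (simp only: distrib_left mult_1_right)
      ultimately show ?thesis using last_a False by simp
    qed
    ultimately show ?thesis by blast
  qed
qed simp

lemma sorted_pos_word_le_bound:
  assumes r: "r \<ge> 2" and "sorted a" and "i \<in> set a"
    and M: "carets r (word_action r (winv (pos_word a))) \<subseteq> {c. fst c < M}"
  shows "i \<le> M + (r - 1) * length a"
proof -
  have "a \<noteq> []" using assms(3) by auto
  then obtain c where "c \<in> carets r (word_action r (winv (pos_word a)))"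
    and "last a \<le> fst c + (r - 1) * (length a - 1)"
    using last_le_caret_inv_pos_word[OF r] by blast
  moreover from this(1) have "fst c < M" using M by blast
  moreover obtain ys y where "a = ys @ [y]" using \<open>a \<noteq> []\<close> rev_exhaust by blast
  then have "i \<le> last a" using assms(2,3) by (auto simp: sorted_append)
  moreover have "(r - 1) * (length a - 1) \<le> (r - 1) * length a" by simp
  ultimately show ?thesis by linarith
qed

text \<open>For \<open>i \<ge> 1\<close> write \<open>i = b + m (p - 1)\<close> with \<open>1 \<le> b < p\<close>; then \<open>x\<^sub>i = x\<^sub>0\<^sup>-\<^sup>m x\<^sub>b x\<^sub>0\<^sup>m\<close>.\<close>

definition conj_exp :: "nat \<Rightarrow> nat \<Rightarrow> nat" where
  "conj_exp p i = (if i = 0 then 0 else (i - 1) div (p - 1))"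

definition conj_base :: "nat \<Rightarrow> nat \<Rightarrow> nat" where
  "conj_base p i = (if i = 0 then 0 else (i - 1) mod (p - 1) + 1)"

lemma conj_base_exp: "i = conj_base p i + conj_exp p i * (p - 1)"
  using mod_div_mult_eq[of "i - 1" "p - 1"] by (simp add: conj_exp_def conj_base_def)

lemma conj_base_less: "p \<ge> 2 \<Longrightarrow> conj_base p i < p"
proof -
  assume "p \<ge> 2"
  then have "(i - 1) mod (p - 1) < p - 1" by simp
  then have "(i - 1) mod (p - 1) + 1 < p" by linarith
  then show ?thesis using \<open>p \<ge> 2\<close> by (simp add: conj_base_def)
qed

lemma conj_exp_le: "conj_exp p i \<le> i"
  by (simp add: conj_exp_def) (meson diff_le_self div_le_dividend le_trans)

lemma conj_exp_mono: "i \<le> j \<Longrightarrow> conj_exp p i \<le> conj_exp p j"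
  by (simp add: conj_exp_def div_le_mono)

lemma fr_eq_x0_conj:
  assumes p: "p \<ge> 2" and b: "b \<ge> 1"
  shows "fr_eq p (replicate m (0, True) @ [(b, False)] @ replicate m (0, False)) [(b + m * (p - 1), False)]"
proof (induction m)
  case (Suc m)
  have "fr_eq p ([(0, True)] @ (replicate m (0, True) @ [(b, False)] @ replicate m (0, False)) @ [(0, False)])
      ([(0, True)] @ [(b + m * (p - 1), False)] @ [(0, False)])"
    by (rule fr_eq_context[OF Suc.IH])
  moreover have "b + m * (p - 1) + p - 1 = b + Suc m * (p - 1)" using p by simp
  then have "fr_eq p [(0, True), (b + m * (p - 1), False), (0, False)] [(b + Suc m * (p - 1), False)]"
    using fr_eq_rel_word[of 0 "b + m * (p - 1)" p] b by simp
  ultimately show ?case by (simp add: replicate_append_same) (rule fr_eq.trans)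
qed (simp add: fr_eq.refl)

lemma fr_eq_conj_base:
  assumes "p \<ge> 2"
  shows "fr_eq p (replicate (conj_exp p i) (0, True) @ [(conj_base p i, False)] @ replicate (conj_exp p i) (0, False))
    [(i, False)]"
proof (cases "i = 0")
  case False
  then have "conj_base p i \<ge> 1" by (simp add: conj_base_def)
  then show ?thesis using fr_eq_x0_conj[OF assms] conj_base_exp[of i p] by metis
qed (simp add: conj_exp_def conj_base_def fr_eq.refl)

text \<open>\<open>small_word p m\<^sub>0 xs\<close> represents \<open>x\<^sub>0\<^bsup>m\<^sub>0\<^esup>\<close> followed by the positive word \<open>xs\<close>: each letter is
  conjugated down to \<open>x\<^sub>b\<close>, and the powers of \<open>x\<^sub>0\<close> between consecutive letters partially
  cancel. Along a sorted word the exponents increase, so their total length telescopes.\<close>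

fun small_word :: "nat \<Rightarrow> nat \<Rightarrow> nat list \<Rightarrow> letter list" where
  "small_word p m\<^sub>0 [] = replicate m\<^sub>0 (0, False)"
| "small_word p m\<^sub>0 (i # xs) = replicate (conj_exp p i - m\<^sub>0) (0, True) @ [(conj_base p i, False)]
     @ small_word p (conj_exp p i) xs"

lemma fr_eq_small_word:
  assumes p: "p \<ge> 2"
  shows "sorted xs \<Longrightarrow> \<forall>i\<in>set xs. m\<^sub>0 \<le> conj_exp p i \<Longrightarrow>
    fr_eq p (replicate m\<^sub>0 (0, False) @ pos_word xs) (small_word p m\<^sub>0 xs)"
proof (induction xs arbitrary: m\<^sub>0)
  case (Cons i xs)
  let ?m = "conj_exp p i" and ?b = "conj_base p i"
  let ?R = "replicate (?m - m\<^sub>0) (0, True) @ [(?b, False)]"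
  have IH: "fr_eq p (replicate ?m (0, False) @ pos_word xs) (small_word p ?m xs)"
    using Cons.IH Cons.prems conj_exp_mono by simp
  have split: "replicate ?m (0, True) = winv (replicate m\<^sub>0 (0, False)) @ replicate (?m - m\<^sub>0) (0, True)"
    using Cons.prems by (simp add: winv_def replicate_add[symmetric])
  have "fr_eq p (replicate m\<^sub>0 (0, False) @ pos_word (i # xs)) (replicate m\<^sub>0 (0, False)
      @ (replicate ?m (0, True) @ [(?b, False)] @ replicate ?m (0, False)) @ pos_word xs)"
    using fr_eq_context[OF fr_eq.sym[OF fr_eq_conj_base[OF p, of i]],
        where x = "replicate m\<^sub>0 (0, False)" and y = "pos_word xs"] by simp
  also have "\<dots> = (replicate m\<^sub>0 (0, False) @ winv (replicate m\<^sub>0 (0, False)))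
      @ ?R @ (replicate ?m (0, False) @ pos_word xs)"
    by (simp only: split append_assoc)
  also have "fr_eq p \<dots> ([] @ ?R @ (replicate ?m (0, False) @ pos_word xs))"
    by (rule fr_eq_append[OF fr_eq_append_winv fr_eq.refl])
  also have "fr_eq p \<dots> (?R @ small_word p ?m xs)"
    using fr_eq_append[OF fr_eq.refl IH, of ?R] by simp
  finally show ?case by simp
qed (simp add: fr_eq.refl)

lemma length_small_word:
  "sorted xs \<Longrightarrow> \<forall>i\<in>set xs. m\<^sub>0 \<le> conj_exp p i \<and> conj_exp p i \<le> M \<Longrightarrow> m\<^sub>0 \<le> M \<Longrightarrow>
    length (small_word p m\<^sub>0 xs) + m\<^sub>0 \<le> length xs + 2 * M"
proof (induction xs arbitrary: m\<^sub>0)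
  case (Cons i xs)
  have "\<forall>j\<in>set xs. conj_exp p i \<le> conj_exp p j \<and> conj_exp p j \<le> M"
    using Cons.prems conj_exp_mono by simp
  then have "length (small_word p (conj_exp p i) xs) + conj_exp p i \<le> length xs + 2 * M"
    using Cons by simp
  moreover have "m\<^sub>0 \<le> conj_exp p i" using Cons.prems by simp
  ultimately show ?case by simp
qed simp

lemma small_word_letters: "p \<ge> 2 \<Longrightarrow> l \<in> set (small_word p m\<^sub>0 xs) \<Longrightarrow> fst l < p"
  by (induction xs arbitrary: m\<^sub>0) (auto simp: conj_base_less)

lemma short_word_sorted_pos_word:
  assumes p: "p \<ge> 2" and "sorted xs" and B: "\<forall>i\<in>set xs. i \<le> B"
  shows "\<exists>W. (\<forall>l\<in>set W. fst l < p) \<and> fr_eq p W (pos_word xs) \<and> length W \<le> length xs + 2 * B"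
proof (intro exI conjI)
  show "\<forall>l\<in>set (small_word p 0 xs). fst l < p" using small_word_letters[OF p] by blast
  show "fr_eq p (small_word p 0 xs) (pos_word xs)"
    using fr_eq_small_word[OF p assms(2), of 0] by (simp add: fr_eq.sym)
  show "length (small_word p 0 xs) \<le> length xs + 2 * B"
  proof -
    have "\<forall>i\<in>set xs. conj_exp p i \<le> B" using B conj_exp_le le_trans by blast
    then show ?thesis using length_small_word[OF assms(2), of 0 p B] by simp
  qed
qed

lemma carets_inv_shift_sort:
  assumes "r \<ge> 1"
  shows "carets r (word_action r (winv (pos_word (shift_sort r N)))) = carets r (word_action r (winv (pos_word N)))"
proof (rule carets_cong)
  fix x assume "valid_point r x"
  then show "word_action r (winv (pos_word (shift_sort r N))) x = word_action r (winv (pos_word N)) x"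
    using word_action_winv_cong[OF assms] word_action_fr_eq[OF fr_eq_shift_sort assms] by metis
qed

lemma short_word_seminormal:
  assumes r: "r \<ge> 2" and "sorted P" and "sorted N" and B: "\<forall>i\<in>set P \<union> set N. i \<le> B"
  shows "\<exists>W. (\<forall>l\<in>set W. fst l < r) \<and> fr_eq r W (pos_word P @ winv (pos_word N))
    \<and> length W \<le> length P + length N + 4 * B"
proof -
  obtain WP WN where WP: "\<forall>l\<in>set WP. fst l < r" "fr_eq r WP (pos_word P)" "length WP \<le> length P + 2 * B"
    and WN: "\<forall>l\<in>set WN. fst l < r" "fr_eq r WN (pos_word N)" "length WN \<le> length N + 2 * B"
    using short_word_sorted_pos_word[OF r] assms(2,3) B by (metis UnCI)
  have "\<forall>l\<in>set (winv WN). fst l < r" using WN(1) winv_letters_less by blast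
  then have "\<forall>l\<in>set (WP @ winv WN). fst l < r" using WP(1) by (metis Un_iff set_append)
  moreover have "fr_eq r (WP @ winv WN) (pos_word P @ winv (pos_word N))"
    using fr_eq_append[OF WP(2) fr_eq_winv[OF WN(2)]] .
  ultimately show ?thesis using WP(3) WN(3) by (intro exI[of _ "WP @ winv WN"]) simp
qed

lemma word_in_generators:
  assumes r: "r \<ge> 2"
  shows "\<exists>W. (\<forall>l\<in>set W. fst l < r) \<and> fr_eq r W G"
proof -
  have r1: "r \<ge> 1" using r by simp
  obtain P N where PN: "fr_eq r G (pos_word P @ winv (pos_word N))"
    using fr_eq_seminormal_form by blast
  let ?P = "shift_sort r P" and ?N = "shift_sort r N"
  have "fr_eq r (pos_word ?P @ winv (pos_word ?N)) (pos_word P @ winv (pos_word N))"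
    using fr_eq_append[OF fr_eq_shift_sort fr_eq_winv[OF fr_eq_shift_sort]] by (metis fr_eq.sym)
  moreover obtain B where "\<forall>i\<in>set ?P \<union> set ?N. i \<le> B"
    using finite_nat_set_iff_bounded_le by blast
  ultimately show ?thesis
    using short_word_seminormal[OF r sorted_shift_sort[OF r1] sorted_shift_sort[OF r1]] PN
    by (meson fr_eq.sym fr_eq.trans)
qed

lemma word_dist_le:
  "\<forall>l\<in>set W. fst l < r \<Longrightarrow> fr_eq r W (winv u @ v) \<Longrightarrow> word_dist r u v \<le> length W"
  unfolding word_dist_def letters_less_iff by (rule Least_le) auto

lemma word_dist_attained:
  assumes "r \<ge> 2"
  obtains W where "length W = word_dist r u v" and "\<forall>l\<in>set W. fst l < r" and "fr_eq r W (winv u @ v)"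
proof -
  obtain W where "\<forall>l\<in>set W. fst l < r" "fr_eq r W (winv u @ v)"
    using word_in_generators[OF assms] by blast
  then have "\<exists>n W. length W = n \<and> (\<forall>l\<in>set W. fst l < r) \<and> fr_eq r W (winv u @ v)" by auto
  then show ?thesis
    using LeastI_ex[of "\<lambda>n. \<exists>W. length W = n \<and> (\<forall>l\<in>set W. fst l < r) \<and> fr_eq r W (winv u @ v)"] that
    unfolding word_dist_def letters_less_iff by blast
qed

lemma short_word_from_carets:
  assumes r: "r \<ge> 2"
    and D: "finite (carets r (word_action r G))" "card (carets r (word_action r G)) \<le> n"
      "carets r (word_action r G) \<subseteq> {c. fst c < M}"
    and R: "finite (carets r (word_action r (winv G)))" "card (carets r (word_action r (winv G))) \<le> n"
      "carets r (word_action r (winv G)) \<subseteq> {c. fst c < M}"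
  shows "\<exists>W. (\<forall>l\<in>set W. fst l < r) \<and> fr_eq r W G \<and> length W \<le> 2 * n + 4 * (M + (r - 1) * n)"
proof -
  have r1: "r \<ge> 1" using r by simp
  obtain ND NR where "length ND = card (carets r (word_action r G))"
    and "length NR = card (carets r (word_action r (winv G)))"
    and "carets r (word_action r (winv (pos_word ND))) \<subseteq> carets r (word_action r G)"
    and "carets r (word_action r (winv (pos_word NR))) \<subseteq> carets r (word_action r (winv G))"
    and G: "fr_eq r G (pos_word NR @ winv (pos_word ND))"
    using fr_eq_leaf_words[OF r D(1) R(1)] by blast
  then have lengths: "length ND \<le> n" "length NR \<le> n"
    and D_sub: "carets r (word_action r (winv (pos_word ND))) \<subseteq> {c. fst c < M}"
    and R_sub: "carets r (word_action r (winv (pos_word NR))) \<subseteq> {c. fst c < M}"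
    using D R by auto
  let ?SD = "shift_sort r ND" and ?SR = "shift_sort r NR" and ?B = "M + (r - 1) * n"
  have bound: "i \<le> ?B" if "i \<in> set ?SR \<union> set ?SD" for i
  proof -
    have "carets r (word_action r (winv (pos_word ?SD))) \<subseteq> {c. fst c < M}"
      "carets r (word_action r (winv (pos_word ?SR))) \<subseteq> {c. fst c < M}"
      using D_sub R_sub carets_inv_shift_sort[OF r1] by simp_all
    then have "i \<le> M + (r - 1) * length ?SR \<or> i \<le> M + (r - 1) * length ?SD"
      using that sorted_pos_word_le_bound[OF r sorted_shift_sort[OF r1]] by blast
    moreover have "(r - 1) * length ?SD \<le> (r - 1) * n" "(r - 1) * length ?SR \<le> (r - 1) * n"
      using lengths by simp_all
    ultimately show ?thesis by linarith
  qed
  obtain W where W: "\<forall>l\<in>set W. fst l < r" "fr_eq r W (pos_word ?SR @ winv (pos_word ?SD))"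
    "length W \<le> length ?SR + length ?SD + 4 * ?B"
    using short_word_seminormal[OF r sorted_shift_sort[OF r1] sorted_shift_sort[OF r1]] bound by blast
  have "fr_eq r (pos_word ?SR @ winv (pos_word ?SD)) (pos_word NR @ winv (pos_word ND))"
    using fr_eq_append[OF fr_eq.sym[OF fr_eq_shift_sort] fr_eq_winv[OF fr_eq.sym[OF fr_eq_shift_sort]]] .
  then have "fr_eq r W G" using W(2) G fr_eq.sym fr_eq.trans by blast
  moreover have "length W \<le> 2 * n + 4 * ?B" using W(3) lengths by simp
  ultimately show ?thesis using W(1) by blast
qed

section \<open>The embedding \<open>j\<^sub>1\<close>\<close>

lemma j1_Nil [simp]: "j1 d [] = []"
  by (simp add: j1_def)

lemma j1_Cons [simp]: "j1 d (l # w) = (d * fst l, snd l) # j1 d w"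
  by (cases l) (simp add: j1_def)

lemma j1_append [simp]: "j1 d (u @ v) = j1 d u @ j1 d v"
  by (simp add: j1_def)

lemma j1_winv: "j1 d (winv w) = winv (j1 d w)"
  by (induction w) auto

lemma length_j1 [simp]: "length (j1 d w) = length w"
  by (simp add: j1_def)

text \<open>On ends, \<open>j\<^sub>1\<close> is induced by \<open>(n, s) \<mapsto> (d n, d s)\<close>, which reads the \<open>p\<close>-ary digit \<open>a\<close> as
  the \<open>q\<close>-ary digit \<open>d a\<close>.\<close>

definition scale_seq :: "nat \<Rightarrow> (nat \<Rightarrow> nat) \<Rightarrow> nat \<Rightarrow> nat" where
  "scale_seq d s = (\<lambda>i. d * s i)"

definition embed_point :: "nat \<Rightarrow> point \<Rightarrow> point" where
  "embed_point d x = (d * fst x, scale_seq d (snd x))"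

definition embed_cyl :: "nat \<Rightarrow> cylinder \<Rightarrow> cylinder" where
  "embed_cyl d c = (d * fst c, map ((*) d) (snd c))"

lemma scale_seq_prepend: "scale_seq d (prepend v s) = prepend (map ((*) d) v) (scale_seq d s)"
  by (simp add: scale_seq_def prepend_def fun_eq_iff)

lemma embed_cyl_point: "embed_point d (cyl_point c s) = cyl_point (embed_cyl d c) (scale_seq d s)"
  by (simp add: embed_point_def cyl_point_def embed_cyl_def scale_seq_prepend)

lemma inj_embed_cyl: "d > 0 \<Longrightarrow> inj (embed_cyl d)"
  by (auto simp: inj_def embed_cyl_def prod_eq_iff inj_map_eq_map)

locale j1_embedding =
  fixes p q d :: nat
  assumes p: "p \<ge> 2" and q: "q \<ge> 2" and d: "d > 0" and q_eq: "q - 1 = d * (p - 1)"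
begin

lemma scale_less: "a < p \<Longrightarrow> d * a < q"
proof -
  assume "a < p"
  then have "a \<le> p - 1" by linarith
  then have "d * a \<le> d * (p - 1)" by simp
  then show ?thesis using q_eq q by linarith
qed

lemma digits_scale_seq: "digits p s \<Longrightarrow> digits q (scale_seq d s)"
  by (simp add: digits_def scale_seq_def scale_less)

lemma valid_cyl_embed_cyl: "valid_cyl p c \<Longrightarrow> valid_cyl q (embed_cyl d c)"
  by (auto simp: valid_cyl_def embed_cyl_def scale_less)

lemma gen_action_embed_point:
  assumes x: "valid_point p x"
  shows "gen_action q (d * k, b) (embed_point d x) = embed_point d (gen_action p (k, b) x)"
proof -
  obtain n s where x_eq: "x = (n, s)" by (cases x)
  have "s 0 < p" using x x_eq by (simp add: valid_point_def digits_def)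
  have dp: "d * (p - 1) = q - 1" and "q - 1 + d = d * p" using q_eq p by (simp_all add: algebra_simps)
  show ?thesis
  proof (cases b)
    case True
    then show ?thesis using d dp
      by (auto simp: x_eq embed_point_def scale_seq_def tail_seq_def distrib_left)
  next
    case False
    consider "n < k" | "k \<le> n" "n < k + p" | "k + p \<le> n" by linarith
    then show ?thesis
    proof cases
      case 2
      then have "n \<le> k + (p - 1)" by linarith
      then have "d * n \<le> d * k + d * (p - 1)" by (metis distrib_left mult_le_mono2)
      then have "d * n < d * k + q" "d * k \<le> d * n" using dp q 2 by simp_all
      moreover have "d * n - d * k = d * (n - k)" by (simp add: diff_mult_distrib2)
      ultimately show ?thesis using False d 2
        by (simp add: x_eq embed_point_def scale_seq_prepend)
    next
      case 3
      then have "d * (k + p) \<le> d * n" by simp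
      then have "d * k + q \<le> d * n" using \<open>q - 1 + d = d * p\<close> d by (simp add: distrib_left)
      moreover have "d * n - (q - 1) = d * (n - (p - 1))" using dp by (simp add: diff_mult_distrib2)
      ultimately show ?thesis using False d 3 by (simp add: x_eq embed_point_def)
    qed (use False d in \<open>simp add: x_eq embed_point_def\<close>)
  qed
qed


lemma word_action_j1:
  "valid_point p x \<Longrightarrow> word_action q (j1 d w) (embed_point d x) = embed_point d (word_action p w x)"
proof (induction w)
  case (Cons l w)
  then show ?case
    using gen_action_embed_point[OF valid_point_word_action[of p x w], of "fst l" "snd l"] p by simp
qed simp

lemma embed_cyl_carets:
  assumes c: "c \<in> carets p (word_action p w)"
  shows "embed_cyl d c \<in> carets q (word_action q (j1 d w))"
proof -
  have valid: "valid_cyl p c" and not_affine: "\<not> affine_on p (word_action p w) c"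
    using c by (simp_all add: carets_def)
  have "\<not> affine_on q (word_action q (j1 d w)) (embed_cyl d c)"
  proof
    assume "affine_on q (word_action q (j1 d w)) (embed_cyl d c)"
    then obtain c' where c': "\<forall>t. digits q t \<longrightarrow> word_action q (j1 d w) (cyl_point (embed_cyl d c) t) = cyl_point c' t"
      unfolding affine_on_def by blast
    \<comment> \<open>dividing the image cylinder by \<open>d\<close> shows that \<open>w\<close> was affine on \<open>c\<close>\<close>
    let ?c = "(fst c' div d, map (\<lambda>x. x div d) (snd c'))"
    have "word_action p w (cyl_point c s) = cyl_point ?c s" if s: "digits p s" for s
    proof -
      obtain m \<sigma> where m\<sigma>: "word_action p w (cyl_point c s) = (m, \<sigma>)" by fastforce
      have "embed_point d (m, \<sigma>) = cyl_point c' (scale_seq d s)"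
        using c' digits_scale_seq[OF s] word_action_j1[of "cyl_point c s" w] valid s m\<sigma>
        by (simp add: embed_cyl_point)
      then have m: "d * m = fst c'" and \<sigma>: "\<And>i. d * \<sigma> i = prepend (snd c') (scale_seq d s) i"
        by (simp_all add: embed_point_def cyl_point_def scale_seq_def fun_eq_iff)
      have "\<sigma> i = prepend (map (\<lambda>x. x div d) (snd c')) s i" for i
      proof -
        have "\<sigma> i = prepend (snd c') (scale_seq d s) i div d" using \<sigma>[of i] d by (metis div_mult_self1_is_m)
        then show ?thesis using d by (simp add: prepend_def scale_seq_def)
      qed
      moreover have "m = fst c' div d" using m d by (metis div_mult_self1_is_m)
      ultimately show ?thesis using m\<sigma> by (auto simp: cyl_point_def)
    qed
    then show False using not_affine unfolding affine_on_def by blast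
  qed
  then show ?thesis using valid_cyl_embed_cyl[OF valid] by (simp add: carets_def)
qed

lemma carets_j1_bounds:
  assumes w: "\<forall>l\<in>set w. fst l < q" and eq: "fr_eq q w (j1 d G)"
  shows "finite (carets p (word_action p G))" and "card (carets p (word_action p G)) \<le> length w"
    and "carets p (word_action p G) \<subseteq> {c. fst c < length w * (q + q)}"
proof -
  have q1: "q \<ge> 1" using q by simp
  have "carets q (word_action q (j1 d G)) = carets q (word_action q w)"
    using carets_cong word_action_fr_eq[OF eq q1] by metis
  then have sub: "embed_cyl d ` carets p (word_action p G) \<subseteq> carets q (word_action q w)"
    using embed_cyl_carets by blast
  have inj: "inj_on (embed_cyl d) (carets p (word_action p G))"
    using inj_embed_cyl[OF d] inj_on_subset by blast
  have fin: "finite (carets q (word_action q w))" "card (carets q (word_action q w)) \<le> length w"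
    using finite_card_carets_word_action[OF q] by auto
  show "finite (carets p (word_action p G))"
    using sub inj fin(1) by (meson finite_imageD finite_subset)
  show "card (carets p (word_action p G)) \<le> length w"
    using card_inj_on_le[OF inj sub fin(1)] fin(2) by linarith
  show "carets p (word_action p G) \<subseteq> {c. fst c < length w * (q + q)}"
  proof
    fix c assume "c \<in> carets p (word_action p G)"
    then have "fst (embed_cyl d c) < length w * (q + q)"
      using sub carets_word_action_roots[OF q1 w] by blast
    moreover have "fst c \<le> fst (embed_cyl d c)" using d by (simp add: embed_cyl_def)
    ultimately show "c \<in> {c. fst c < length w * (q + q)}" by simp
  qed
qed

lemma fr_eq_j1: "fr_eq p u v \<Longrightarrow> fr_eq q (j1 d u) (j1 d v)"
proof (induction rule: fr_eq.induct)
  case (cancel u i b v)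
  show ?case using fr_eq.cancel[of q "j1 d u" "d * i" b "j1 d v"] by simp
next
  case (rel i j u v)
  have "d * j + q - 1 = d * (j + p - 1)" using q_eq p q by (simp add: algebra_simps)
  moreover have "d * i < d * j" using rel d by simp
  ultimately show ?case using fr_eq.rel[of "d * i" "d * j" q "j1 d u" "j1 d v"] by simp
qed (auto intro: fr_eq.intros)

lemma j1_letters_less: "\<forall>l\<in>set w. fst l < p \<Longrightarrow> \<forall>l\<in>set (j1 d w). fst l < q"
  by (auto simp: j1_def scale_less)


lemma short_word_from_j1:
  assumes w: "\<forall>l\<in>set w. fst l < q" and eq: "fr_eq q w (j1 d G)"
  shows "\<exists>W. (\<forall>l\<in>set W. fst l < p) \<and> fr_eq p W G \<and> length W \<le> (2 + 8 * q + 4 * p) * length w"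
proof -
  define n M where "n = length w" and "M = length w * (q + q)"
  have "fr_eq q (winv w) (j1 d (winv G))" using fr_eq_winv[OF eq] by (simp add: j1_winv)
  moreover have "\<forall>l\<in>set (winv w). fst l < q" using w winv_letters_less by blast
  ultimately have R: "finite (carets p (word_action p (winv G)))"
    "card (carets p (word_action p (winv G))) \<le> n"
    "carets p (word_action p (winv G)) \<subseteq> {c. fst c < M}"
    using carets_j1_bounds[of "winv w" "winv G"] by (simp_all add: n_def M_def)
  obtain W where W: "\<forall>l\<in>set W. fst l < p" "fr_eq p W G"
    "length W \<le> 2 * n + 4 * (M + (p - 1) * n)"
    using short_word_from_carets[OF p carets_j1_bounds[OF w eq, folded n_def M_def] R] by blast
  have "2 * n + 4 * (M + (p - 1) * n) \<le> 2 * n + 4 * (M + p * n)" by simp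
  also have "\<dots> = (2 + 8 * q + 4 * p) * n" by (simp add: M_def n_def algebra_simps)
  finally show ?thesis using W n_def by fastforce
qed

lemma word_dist_j1_le: "word_dist q (j1 d u) (j1 d v) \<le> word_dist p u v"
proof -
  obtain W where W: "length W = word_dist p u v" "\<forall>l\<in>set W. fst l < p" "fr_eq p W (winv u @ v)"
    using word_dist_attained[OF p] by blast
  have "\<forall>l\<in>set (j1 d W). fst l < q" using j1_letters_less W(2) by blast
  moreover have "fr_eq q (j1 d W) (winv (j1 d u) @ j1 d v)" using fr_eq_j1[OF W(3)] by (simp add: j1_winv)
  ultimately have "word_dist q (j1 d u) (j1 d v) \<le> length (j1 d W)" by (rule word_dist_le)
  then show ?thesis using W(1) by simp
qed

lemma word_dist_le_j1: "word_dist p u v \<le> (2 + 8 * q + 4 * p) * word_dist q (j1 d u) (j1 d v)"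
proof -
  obtain w where w: "length w = word_dist q (j1 d u) (j1 d v)" "\<forall>l\<in>set w. fst l < q"
      "fr_eq q w (winv (j1 d u) @ j1 d v)"
    using word_dist_attained[OF q] by blast
  then have "fr_eq q w (j1 d (winv u @ v))" by (simp add: j1_winv)
  then obtain W where W: "\<forall>l\<in>set W. fst l < p" "fr_eq p W (winv u @ v)"
      "length W \<le> (2 + 8 * q + 4 * p) * length w"
    using short_word_from_j1[OF w(2)] by blast
  then have "word_dist p u v \<le> length W" by (intro word_dist_le)
  then show ?thesis using W(3) w(1) by simp
qed

end

theorem proposition8:
  fixes p q d :: nat
  assumes "p \<ge> 2" and "q \<ge> 2" and "d > 0" and "q - 1 = d * (p - 1)"
  shows "\<exists>C K :: real. C \<ge> 1 \<and> K \<ge> 0 \<and>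
    (\<forall>u v. real (word_dist p u v) / C - K \<le> real (word_dist q (j1 d u) (j1 d v))
          \<and> real (word_dist q (j1 d u) (j1 d v)) \<le> C * real (word_dist p u v) + K)"
proof -
  interpret j1_embedding p q d using assms by unfold_locales
  define C :: real where "C = 2 + 8 * q + 4 * p"
  have C: "C \<ge> 1" by (simp add: C_def)
  have "real (word_dist p u v) / C \<le> real (word_dist q (j1 d u) (j1 d v))" for u v
  proof -
    have "real (word_dist p u v) \<le> C * real (word_dist q (j1 d u) (j1 d v))"
      using word_dist_le_j1[of u v] unfolding C_def by (metis of_nat_le_iff of_nat_mult of_nat_add
          of_nat_numeral)
    then show ?thesis using C by (simp add: divide_le_eq mult.commute)
  qed
  moreover have "real (word_dist q (j1 d u) (j1 d v)) \<le> C * real (word_dist p u v)" for u v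
    using word_dist_j1_le[of u v] C mult_right_mono[OF C, of "real (word_dist p u v)"] by simp
  ultimately show ?thesis using C by (intro exI[of _ C] exI[of _ 0]) simp
qed

end
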